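(* Let $h\in\mathcal O$ be nonzero with $h(0)=0$. Assume that either (1) the ring $\mathcal V_0$ of logarithmic differential operators relative to $h$ coincides with the $\mathcal O$-subalgebra $\mathcal O[\mathrm{Der}(-\log h)]$ of $\mathcal D$ generated by $\mathrm{Der}(-\log h)$, or (2) the ideal $\mathrm{Ann}_{\mathcal D}h^s$ is generated by operators of order one and $h$ belongs to the ideal $(h'_{x_1},\dots,h'_{x_n})\mathcal O$. Then $\mathrm{Ann}_{\mathcal D}(1/h)$ is generated by operators of order one if and only if $\mathrm{Ann}_{\mathcal D}(1/h)$ is generated by logarithmic operators.
   Context: $\mathcal O=\mathbf C\{x_1,\dots,x_n\}$, $\mathcal D=\mathcal O\langle\partial_1,\dots,\partial_n\rangle$ with the order filtration. A logarithmic operator relative to $h$ is $P\in\mathcal D$ with $P\cdot(h^k\mathcal O)\subset h^k\mathcal O$ for all $k\in\mathbf N$; they form a ring $\mathcal V_0$. $\mathrm{Der}(-\log h)$ is the $\mathcal O$-module of vector fields $v$ with $v(h)\in h\mathcal O$. $\mathrm{Ann}_{\mathcal D}h^s$ is the ideal of $P\in\mathcal D$ with $P\cdot h^s=0$ in $\mathcal O[1/h,s]h^s$; $\mathrm{Ann}_{\mathcal D}(1/h)$ is the ideal of operators annihilating $1/h\in\mathcal O[1/h]$. *)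

theory Defs
  imports "HOL-Analysis.Analysis"
begin

(* Variables x_i are indexed by a finite type 'n (n = CARD('n)).
   Multi-indices are functions 'n => nat; a (formal) power series is its
   coefficient function. O = C{x} is the set of convergent ones. *)

type_synonym 'n mind = "'n \<Rightarrow> nat"
type_synonym 'n cps = "('n \<Rightarrow> nat) \<Rightarrow> complex"
(* a differential operator  sum_alpha a_alpha d^alpha  as its coefficient family *)
type_synonym 'n dop = "('n \<Rightarrow> nat) \<Rightarrow> ('n \<Rightarrow> nat) \<Rightarrow> complex"

definition mi0 :: "'n mind" where "mi0 = (\<lambda>_. 0)"

definition mdeg :: "('n::finite) mind \<Rightarrow> nat" where
  "mdeg \<alpha> = (\<Sum>i\<in>UNIV. \<alpha> i)"

definition convergent_ps :: "('n::finite) cps \<Rightarrow> bool" where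
  "convergent_ps c \<longleftrightarrow>
     (\<exists>r::real>0. (\<lambda>\<alpha>. norm (c \<alpha>) * (\<Prod>i\<in>UNIV. r ^ \<alpha> i)) summable_on UNIV)"

definition ps_zero :: "'n cps" where "ps_zero = (\<lambda>_. 0)"
definition ps_one :: "'n cps" where "ps_one = (\<lambda>\<alpha>. if \<alpha> = mi0 then 1 else 0)"

definition ps_mult :: "('n::finite) cps \<Rightarrow> 'n cps \<Rightarrow> 'n cps" where
  "ps_mult f g = (\<lambda>\<alpha>. \<Sum>\<beta>\<in>{\<beta>. \<forall>i. \<beta> i \<le> \<alpha> i}. f \<beta> * g (\<lambda>i. \<alpha> i - \<beta> i))"

fun ps_pow :: "('n::finite) cps \<Rightarrow> nat \<Rightarrow> 'n cps" where
  "ps_pow f 0 = ps_one"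
| "ps_pow f (Suc k) = ps_mult f (ps_pow f k)"

definition ps_pd :: "'n \<Rightarrow> 'n cps \<Rightarrow> 'n cps" where
  "ps_pd i f = (\<lambda>\<alpha>. of_nat (\<alpha> i + 1) * f (\<alpha>(i := \<alpha> i + 1)))"

definition ps_pdm :: "('n::finite) mind \<Rightarrow> 'n cps \<Rightarrow> 'n cps" where
  "ps_pdm \<alpha> f = (\<lambda>\<beta>. (\<Prod>i\<in>UNIV. pochhammer (of_nat (\<beta> i + 1)) (\<alpha> i)) * f (\<lambda>i. \<beta> i + \<alpha> i))"

definition dsupp :: "'n dop \<Rightarrow> 'n mind set" where
  "dsupp P = {\<alpha>. P \<alpha> \<noteq> ps_zero}"

definition is_dop :: "('n::finite) dop \<Rightarrow> bool" where
  "is_dop P \<longleftrightarrow> finite (dsupp P) \<and> (\<forall>\<alpha>. convergent_ps (P \<alpha>))"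

definition dop_apply :: "('n::finite) dop \<Rightarrow> 'n cps \<Rightarrow> 'n cps" where
  "dop_apply P f = (\<lambda>\<beta>. \<Sum>\<alpha>\<in>dsupp P. ps_mult (P \<alpha>) (ps_pdm \<alpha> f) \<beta>)"

definition dop_ord_le :: "('n::finite) dop \<Rightarrow> nat \<Rightarrow> bool" where
  "dop_ord_le P k \<longleftrightarrow> (\<forall>\<alpha>\<in>dsupp P. mdeg \<alpha> \<le> k)"

definition dop_zero :: "'n dop" where "dop_zero = (\<lambda>_ _. 0)"

definition dop_add :: "'n dop \<Rightarrow> 'n dop \<Rightarrow> 'n dop" where
  "dop_add P Q = (\<lambda>\<alpha> \<beta>. P \<alpha> \<beta> + Q \<alpha> \<beta>)"

definition mult_op :: "'n cps \<Rightarrow> 'n dop" where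
  "mult_op a = (\<lambda>\<alpha>. if \<alpha> = mi0 then a else ps_zero)"

(* product in D (Leibniz rule):
   (a d^alpha)(b d^beta) = sum_{gamma<=alpha} binom(alpha,gamma) a d^gamma(b) d^(alpha-gamma+beta) *)
definition dop_comp :: "('n::finite) dop \<Rightarrow> 'n dop \<Rightarrow> 'n dop" where
  "dop_comp P Q = (\<lambda>\<delta> \<epsilon>. \<Sum>\<alpha>\<in>dsupp P. \<Sum>\<beta>\<in>dsupp Q. \<Sum>\<gamma>\<in>{\<gamma>. \<forall>i. \<gamma> i \<le> \<alpha> i}.
      if (\<forall>i. \<alpha> i - \<gamma> i + \<beta> i = \<delta> i)
      then of_nat (\<Prod>i\<in>UNIV. \<alpha> i choose \<gamma> i) * ps_mult (P \<alpha>) (ps_pdm \<gamma> (Q \<beta>)) \<epsilon>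
      else 0)"

inductive_set dop_lideal :: "('n::finite) dop set \<Rightarrow> 'n dop set" for S where
  lid_zero: "dop_zero \<in> dop_lideal S"
| lid_gen: "P \<in> S \<Longrightarrow> P \<in> dop_lideal S"
| lid_add: "P \<in> dop_lideal S \<Longrightarrow> Q \<in> dop_lideal S \<Longrightarrow> dop_add P Q \<in> dop_lideal S"
| lid_lmult: "is_dop A \<Longrightarrow> P \<in> dop_lideal S \<Longrightarrow> dop_comp A P \<in> dop_lideal S"

definition gen_by_order_one :: "('n::finite) dop set \<Rightarrow> bool" where
  "gen_by_order_one I \<longleftrightarrow> (\<exists>S. (\<forall>P\<in>S. is_dop P \<and> dop_ord_le P 1) \<and> dop_lideal S = I)"

definition log_ops :: "('n::finite) cps \<Rightarrow> 'n dop set" where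
  "log_ops h = {P. is_dop P \<and> (\<forall>(k::nat) f. convergent_ps f \<longrightarrow>
      (\<exists>g. convergent_ps g \<and> dop_apply P (ps_mult (ps_pow h k) f) = ps_mult (ps_pow h k) g))}"

definition log_derivs :: "('n::finite) cps \<Rightarrow> 'n dop set" where
  "log_derivs h = {v. is_dop v \<and> (\<forall>\<alpha>\<in>dsupp v. mdeg \<alpha> = 1) \<and>
      (\<exists>g. convergent_ps g \<and> dop_apply v h = ps_mult h g)}"

inductive_set O_alg :: "('n::finite) cps \<Rightarrow> 'n dop set" for h where
  oa_coeff: "convergent_ps a \<Longrightarrow> mult_op a \<in> O_alg h"
| oa_der: "v \<in> log_derivs h \<Longrightarrow> v \<in> O_alg h"
| oa_add: "P \<in> O_alg h \<Longrightarrow> Q \<in> O_alg h \<Longrightarrow> dop_add P Q \<in> O_alg h"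
| oa_comp: "P \<in> O_alg h \<Longrightarrow> Q \<in> O_alg h \<Longrightarrow> dop_comp P Q \<in> O_alg h"

(* a fixed enumeration of the variables; partial derivatives commute, so the
   choice is irrelevant *)
definition idx_list :: "('n::finite) list" where
  "idx_list = (SOME xs. distinct xs \<and> set xs = UNIV)"

definition iter_pd :: "('n::finite \<Rightarrow> 'a \<Rightarrow> 'a) \<Rightarrow> 'n mind \<Rightarrow> 'a \<Rightarrow> 'a" where
  "iter_pd d \<alpha> m = fold (\<lambda>i. d i ^^ \<alpha> i) idx_list m"

(* element (g,k) of O[1/h] stands for g / h^k;  d_i (g/h^k) = (h d_i g - k g d_i h)/h^(k+1) *)
definition loc_pd :: "('n::finite) cps \<Rightarrow> 'n \<Rightarrow> 'n cps \<times> nat \<Rightarrow> 'n cps \<times> nat" where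
  "loc_pd h i m = (case m of (g, k) \<Rightarrow>
     ((\<lambda>\<beta>. ps_mult h (ps_pd i g) \<beta> - of_nat k * ps_mult g (ps_pd i h) \<beta>), Suc k))"

(* Ann_D(1/h): P . (1/h) = (sum_alpha P_alpha N_alpha h^(M-|alpha|)) / h^(1+M) = 0 *)
definition ann_inv :: "('n::finite) cps \<Rightarrow> 'n dop set" where
  "ann_inv h = {P. is_dop P \<and>
     (let M = (\<Sum>\<alpha>\<in>dsupp P. mdeg \<alpha>) in
       (\<lambda>\<beta>. \<Sum>\<alpha>\<in>dsupp P. ps_mult (ps_mult (P \<alpha>) (fst (iter_pd (loc_pd h) \<alpha> (ps_one, 1))))
                                (ps_pow h (M - mdeg \<alpha>)) \<beta>) = ps_zero)}"

(* element (G,k) of O[1/h,s]h^s stands for (sum_j s^j G j) / h^k * h^s;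
   d_i (G h^(s-k)) = (h d_i G + (s-k) G d_i h) h^(s-k-1) *)
definition hs_pd :: "('n::finite) cps \<Rightarrow> 'n \<Rightarrow> (nat \<Rightarrow> 'n cps) \<times> nat \<Rightarrow> (nat \<Rightarrow> 'n cps) \<times> nat" where
  "hs_pd h i m = (case m of (G, k) \<Rightarrow>
     ((\<lambda>j \<beta>. ps_mult h (ps_pd i (G j)) \<beta> - of_nat k * ps_mult (G j) (ps_pd i h) \<beta>
             + (case j of 0 \<Rightarrow> 0 | Suc j' \<Rightarrow> ps_mult (G j') (ps_pd i h) \<beta>)), Suc k))"

definition hs_gen :: "(nat \<Rightarrow> 'n cps) \<times> nat" where
  "hs_gen = ((\<lambda>j. if j = 0 then ps_one else ps_zero), 0)"

definition ann_hs :: "('n::finite) cps \<Rightarrow> 'n dop set" where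
  "ann_hs h = {P. is_dop P \<and>
     (let M = (\<Sum>\<alpha>\<in>dsupp P. mdeg \<alpha>) in
       \<forall>j. (\<lambda>\<beta>. \<Sum>\<alpha>\<in>dsupp P. ps_mult (ps_mult (P \<alpha>) (fst (iter_pd (hs_pd h) \<alpha> hs_gen) j))
                                   (ps_pow h (M - mdeg \<alpha>)) \<beta>) = ps_zero)}"

definition in_jacobian_ideal :: "('n::finite) cps \<Rightarrow> bool" where
  "in_jacobian_ideal h \<longleftrightarrow> (\<exists>a. (\<forall>i. convergent_ps (a i)) \<and>
      h = (\<lambda>\<beta>. \<Sum>i\<in>UNIV. ps_mult (a i) (ps_pd i h) \<beta>))"

end

theory Submission
  imports Defs "HOL-Computational_Algebra.Polynomial"
begin

text \<open>
  An order-one operator \<open>p\<^sub>0 + \<Sum> p\<^sub>i \<partial>\<^sub>i\<close> kills \<open>1/h\<close> iff \<open>p\<^sub>0 h = \<Sum> p\<^sub>i \<partial>\<^sub>i h\<close>, and then it maps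
  \<open>h\<^sup>k f\<close> into \<open>h\<^sup>k \<O>\<close>; so order-one generators of \<open>Ann(1/h)\<close> are logarithmic.  Conversely it
  suffices to show that every logarithmic \<open>P\<close> in \<open>Ann(1/h)\<close> lies in the left ideal generated by the
  order-one annihilators.

  Under (1), a logarithmic vector field \<open>v\<close> with \<open>v(h) = g h\<close> gives the order-one annihilator
  \<open>v + g\<close>, and every element of the algebra generated by \<open>\<O>\<close> and these is \<open>c + L\<close> with \<open>L\<close> in
  their left ideal; as \<open>P\<close> and \<open>L\<close> kill \<open>1/h\<close>, so does \<open>c\<close>, whence \<open>c = 0\<close>.

  Under (2), an Euler field \<open>\<xi>\<close> with \<open>\<xi>(h) = h\<close> gives the annihilator \<open>\<xi> + 1\<close> and from it
  operators \<open>E\<^sub>j\<close> in the ideal with \<open>E\<^sub>j(h\<^sup>m) = (m\<^sup>j - (-1)\<^sup>j) h\<^sup>m\<close>.  Interpolating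
  \<open>P(h\<^sup>m) \<in> h\<^sup>m \<O>\<close> in \<open>m\<close> writes \<open>P h\<^sup>s\<close> as \<open>(\<Sum> s\<^sup>j p\<^sub>j) h\<^sup>s\<close>, and \<open>P - \<Sum> p\<^sub>j E\<^sub>j\<close> annihilates
  \<open>h\<^sup>s\<close>.  Since specialising \<open>s = -1\<close> maps \<open>Ann h\<^sup>s\<close> into \<open>Ann(1/h)\<close>, its order-one generators
  lie in the ideal.
\<close>

section \<open>Formal power series\<close>

definition le_set :: "('n::finite) mind \<Rightarrow> 'n mind set" where
  "le_set \<alpha> = {\<beta>. \<forall>i. \<beta> i \<le> \<alpha> i}"

lemma finite_le_set[simp]: "finite (le_set (\<alpha>::('n::finite) mind))"
proof -
  have "le_set \<alpha> = Pi\<^sub>E UNIV (\<lambda>i. {..\<alpha> i})"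
    by (auto simp: le_set_def PiE_UNIV_domain)
  then show ?thesis by (simp add: finite_PiE)
qed

lemma ps_mult_le: "ps_mult f g \<alpha> = (\<Sum>\<beta>\<in>le_set \<alpha>. f \<beta> * g (\<lambda>i. \<alpha> i - \<beta> i))"
  by (simp add: ps_mult_def le_set_def)

lemma ps_mult_comm: "ps_mult f g = ps_mult g (f::('n::finite) cps)"
proof
  fix \<alpha>
  show "ps_mult f g \<alpha> = ps_mult g f \<alpha>"
    unfolding ps_mult_le
    by (rule sum.reindex_bij_witness[where i="\<lambda>\<beta> i. \<alpha> i - \<beta> i" and j="\<lambda>\<beta> i. \<alpha> i - \<beta> i"])
       (auto simp: le_set_def fun_eq_iff mult.commute)
qed

lemma ps_mult_assoc: "ps_mult (ps_mult f g) k = ps_mult f (ps_mult g (k::('n::finite) cps))"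
proof
  fix \<alpha>
  have "ps_mult (ps_mult f g) k \<alpha> = (\<Sum>\<beta>\<in>le_set \<alpha>. \<Sum>\<gamma>\<in>le_set \<beta>. f \<gamma> * g (\<lambda>i. \<beta> i - \<gamma> i) * k (\<lambda>i. \<alpha> i - \<beta> i))"
    by (simp add: ps_mult_le sum_distrib_right)
  also have "\<dots> = (\<Sum>(\<beta>,\<gamma>)\<in>Sigma (le_set \<alpha>) le_set. f \<gamma> * g (\<lambda>i. \<beta> i - \<gamma> i) * k (\<lambda>i. \<alpha> i - \<beta> i))"
    by (simp add: sum.Sigma)
  also have "\<dots> = (\<Sum>(\<gamma>,\<delta>)\<in>Sigma (le_set \<alpha>) (\<lambda>\<gamma>. le_set (\<lambda>i. \<alpha> i - \<gamma> i)). f \<gamma> * (g \<delta> * k (\<lambda>i. \<alpha> i - \<gamma> i - \<delta> i)))"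
    apply (rule sum.reindex_bij_witness[where i="\<lambda>(\<gamma>,\<delta>). (\<lambda>i. \<gamma> i + \<delta> i, \<gamma>)" and j="\<lambda>(\<beta>,\<gamma>). (\<gamma>, \<lambda>i. \<beta> i - \<gamma> i)"])
    by (clarsimp simp: le_set_def fun_eq_iff mult.assoc diff_diff_add; metis order_trans diff_le_mono le_diff_conv2 add.commute)+
  also have "\<dots> = ps_mult f (ps_mult g k) \<alpha>"
    by (simp add: ps_mult_le sum_distrib_left sum.Sigma)
  finally show "ps_mult (ps_mult f g) k \<alpha> = ps_mult f (ps_mult g k) \<alpha>" .
qed

lemma le_set_mi0: "le_set mi0 = {mi0}"
  by (auto simp: le_set_def mi0_def)

lemma mi0_in_le_set[simp]: "mi0 \<in> le_set \<alpha>"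
  by (simp add: le_set_def mi0_def)

lemma ps_mult_one: "ps_mult ps_one f = (f::('n::finite) cps)"
proof
  fix \<alpha>
  have "ps_mult ps_one f \<alpha> = (\<Sum>\<beta>\<in>le_set \<alpha>. if \<beta> = mi0 then f (\<lambda>i. \<alpha> i - \<beta> i) else 0)"
    unfolding ps_mult_le ps_one_def by (rule sum.cong) auto
  also have "\<dots> = f \<alpha>" by (simp add: sum.delta' mi0_def[symmetric]) (simp add: mi0_def)
  finally show "ps_mult ps_one f \<alpha> = f \<alpha>" .
qed

lemma ps_mult_add: "ps_mult f (\<lambda>\<alpha>. g \<alpha> + k \<alpha>) = (\<lambda>\<alpha>. ps_mult f g \<alpha> + ps_mult f (k::('n::finite) cps) \<alpha>)"
  by (simp add: ps_mult_le fun_eq_iff distrib_left sum.distrib)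

lemma ps_mult_scale: "ps_mult f (\<lambda>\<alpha>. c * g \<alpha>) = (\<lambda>\<alpha>. c * ps_mult f (g::('n::finite) cps) \<alpha>)"
  by (simp add: ps_mult_le fun_eq_iff sum_distrib_left mult.left_commute)

lemma ps_mult_add_right: "ps_mult (\<lambda>\<alpha>. g \<alpha> + k \<alpha>) f = (\<lambda>\<alpha>. ps_mult g f \<alpha> + ps_mult (k::('n::finite) cps) f \<alpha>)"
  using ps_mult_add[of f g k] by (simp add: ps_mult_comm)

text \<open>Power series form a type, so that the ring structure of \<open>\<O>\<close> is available through type
  classes; convergence is the separate predicate \<open>conv_ps\<close>.\<close>

typedef 'n ps = "UNIV :: (('n \<Rightarrow> nat) \<Rightarrow> complex) set" morphisms coef Ps by auto

setup_lifting type_definition_ps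

instantiation ps :: (finite) comm_ring_1
begin
lift_definition zero_ps :: "'a ps" is ps_zero .
lift_definition one_ps :: "'a ps" is ps_one .
lift_definition plus_ps :: "'a ps \<Rightarrow> 'a ps \<Rightarrow> 'a ps" is "\<lambda>f g \<alpha>. f \<alpha> + g \<alpha>" .
lift_definition minus_ps :: "'a ps \<Rightarrow> 'a ps \<Rightarrow> 'a ps" is "\<lambda>f g \<alpha>. f \<alpha> - g \<alpha>" .
lift_definition uminus_ps :: "'a ps \<Rightarrow> 'a ps" is "\<lambda>f \<alpha>. - f \<alpha>" .
lift_definition times_ps :: "'a ps \<Rightarrow> 'a ps \<Rightarrow> 'a ps" is ps_mult .
instance
proof
  fix a b c :: "'a ps"
  show "a * b * c = a * (b * c)" by transfer (rule ps_mult_assoc)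
  show "a * b = b * a" by transfer (rule ps_mult_comm)
  show "1 * a = a" by transfer (rule ps_mult_one)
  show "(a + b) * c = a * c + b * c" by transfer (simp add: ps_mult_add_right)
  show "a + b + c = a + (b + c)" by transfer (simp add: add.assoc)
  show "a + b = b + a" by transfer (simp add: add.commute)
  show "0 + a = a" by transfer (simp add: ps_zero_def)
  show "- a + a = 0" by transfer (simp add: ps_zero_def)
  show "a - b = a + - b" by transfer simp
  show "(0::'a ps) \<noteq> 1" by transfer (auto simp: ps_zero_def ps_one_def fun_eq_iff)
qed
end

lemma coef_zero[simp]: "coef 0 = ps_zero" by transfer simp
lemma coef_one[simp]: "coef 1 = ps_one" by transfer simp
lemma coef_add[simp]: "coef (a + b) \<alpha> = coef a \<alpha> + coef b \<alpha>" by transfer simp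
lemma coef_diff[simp]: "coef (a - b) \<alpha> = coef a \<alpha> - coef b \<alpha>" by transfer simp
lemma coef_uminus[simp]: "coef (- a) \<alpha> = - coef a \<alpha>" by transfer simp
lemma coef_mult: "coef (a * b) = ps_mult (coef a) (coef b)" by transfer simp
lemma coef_pow: "coef (a ^ k) = ps_pow (coef a) k"
  by (induction k) (auto simp: coef_mult)
lemma ps_pow_Ps: "ps_pow f k = coef (Ps f ^ k)"
  by (simp add: coef_pow Ps_inverse)
lemma coef_sum: "coef (sum F A) \<alpha> = (\<Sum>x\<in>A. coef (F x) \<alpha>)"
  by (induction A rule: infinite_finite_induct) (auto simp: ps_zero_def)
lemma Ps_zero[simp]: "Ps ps_zero = 0" by (metis coef_inverse coef_zero)
lemma Ps_one[simp]: "Ps ps_one = 1" by (metis coef_inverse coef_one)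
lemma coef_Ps[simp]: "coef (Ps f) = f" by (simp add: Ps_inverse)
declare coef_inverse[simp]
lemma ps_mult_coef: "ps_mult f g = coef (Ps f * Ps g)" by (simp add: coef_mult)

lemma coef_of_nat_mult: "coef (of_nat k * a) \<beta> = of_nat k * coef a \<beta>"
  by (induction k) (auto simp: algebra_simps ps_zero_def)

lemma Ps_eqI: "(\<And>\<beta>. f \<beta> = coef a \<beta>) \<Longrightarrow> Ps f = a"
  by (metis coef_inverse ext)

lemma mdeg_add: "mdeg (\<lambda>i. \<alpha> i + \<beta> i) = mdeg \<alpha> + mdeg (\<beta>::('n::finite) mind)"
  by (simp add: mdeg_def sum.distrib)

lemma le_mdeg: "\<alpha> i \<le> mdeg (\<alpha>::('n::finite) mind)"
  unfolding mdeg_def by (rule member_le_sum) auto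

lemma finite_mdeg_eq: "finite {\<alpha>::('n::finite) mind. mdeg \<alpha> = d}"
  by (rule finite_subset[OF _ finite_le_set[of "\<lambda>_. d"]]) (auto simp: le_set_def intro: le_mdeg[THEN order_trans])

fun base_code :: "'n list \<Rightarrow> nat \<Rightarrow> ('n \<Rightarrow> nat) \<Rightarrow> nat" where
  "base_code [] B \<alpha> = 0"
| "base_code (x#xs) B \<alpha> = \<alpha> x + B * base_code xs B \<alpha>"

lemma base_code_add: "base_code xs B (\<lambda>i. \<alpha> i + \<beta> i) = base_code xs B \<alpha> + base_code xs B \<beta>"
  by (induction xs) (auto simp: algebra_simps)

lemma base_code_inj: "(\<forall>i\<in>set xs. \<alpha> i < B \<and> \<beta> i < B) \<Longrightarrow> base_code xs B \<alpha> = base_code xs B \<beta> \<Longrightarrow> \<forall>i\<in>set xs. \<alpha> i = \<beta> i"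
proof (induction xs)
  case Nil then show ?case by simp
next
  case (Cons x xs)
  have e: "\<alpha> x + B * base_code xs B \<alpha> = \<beta> x + B * base_code xs B \<beta>" using Cons.prems by simp
  have bx: "\<alpha> x < B" "\<beta> x < B" using Cons.prems by auto
  from e have "(\<alpha> x + B * base_code xs B \<alpha>) mod B = (\<beta> x + B * base_code xs B \<beta>) mod B" by simp
  then have 1: "\<alpha> x = \<beta> x" using bx by simp
  with e have "B * base_code xs B \<alpha> = B * base_code xs B \<beta>" by simp
  then have "base_code xs B \<alpha> = base_code xs B \<beta>" using bx by simp
  with Cons show ?case using 1 by auto
qed

lemma idx_list_enumerates: "distinct (idx_list::('n::finite) list) \<and> set (idx_list::'n list) = UNIV"
proof -
  have "\<exists>xs :: 'n list. distinct xs \<and> set xs = UNIV"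
    using finite_distinct_list[of "UNIV::'n set"] by auto
  from someI_ex[OF this] show ?thesis unfolding idx_list_def .
qed

lemma idx_distinct[simp]: "distinct (idx_list::('n::finite) list)"
  using idx_list_enumerates by blast

lemma idx_set[simp]: "set (idx_list::('n::finite) list) = UNIV"
  using idx_list_enumerates by blast

lemma base_code_idx_list_inj:
  fixes \<alpha> \<beta> :: "('n::finite) mind"
  assumes "\<And>i. \<alpha> i < B" "\<And>i. \<beta> i < B" "base_code idx_list B \<alpha> = base_code idx_list B \<beta>"
  shows "\<alpha> = \<beta>"
  using base_code_inj[where xs=idx_list and B=B and \<alpha>=\<alpha> and \<beta>=\<beta>] assms by auto

lemma ps_nonzero_coef: "a \<noteq> 0 \<Longrightarrow> \<exists>\<alpha>. coef a \<alpha> \<noteq> 0"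
  by (metis coef_inject coef_zero ext ps_zero_def)

lemma ps_lowest_term:
  fixes a :: "('n::finite) ps" and key :: "'n mind \<Rightarrow> nat"
  assumes "a \<noteq> 0"
  obtains \<alpha>0 where "coef a \<alpha>0 \<noteq> 0" "\<And>\<alpha>. coef a \<alpha> \<noteq> 0 \<Longrightarrow> mdeg \<alpha>0 \<le> mdeg \<alpha>"
    "\<And>\<alpha>. coef a \<alpha> \<noteq> 0 \<Longrightarrow> mdeg \<alpha> = mdeg \<alpha>0 \<Longrightarrow> key \<alpha>0 \<le> key \<alpha>"
proof -
  define da where "da = (LEAST d. \<exists>\<alpha>. coef a \<alpha> \<noteq> 0 \<and> mdeg \<alpha> = d)"
  have ex: "\<exists>\<alpha>. coef a \<alpha> \<noteq> 0 \<and> mdeg \<alpha> = da"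
    unfolding da_def using ps_nonzero_coef[OF assms] by (rule_tac LeastI_ex) auto
  have le: "da \<le> mdeg \<alpha>" if "coef a \<alpha> \<noteq> 0" for \<alpha>
    unfolding da_def by (rule Least_le) (use that in auto)
  define A where "A = {\<alpha>. coef a \<alpha> \<noteq> 0 \<and> mdeg \<alpha> = da}"
  have fA: "finite A" unfolding A_def by (rule finite_subset[OF _ finite_mdeg_eq[of da]]) auto
  have "Min (key ` A) \<in> key ` A" using fA ex by (intro Min_in) (auto simp: A_def)
  then obtain \<alpha>0 where a0: "\<alpha>0 \<in> A" "key \<alpha>0 = Min (key ` A)" by auto
  show ?thesis
  proof (rule that[of \<alpha>0])
    show "coef a \<alpha>0 \<noteq> 0" using a0 by (simp add: A_def)
    show "mdeg \<alpha>0 \<le> mdeg \<alpha>" if "coef a \<alpha> \<noteq> 0" for \<alpha> using a0 le[OF that] by (simp add: A_def)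
    show "key \<alpha>0 \<le> key \<alpha>" if "coef a \<alpha> \<noteq> 0" "mdeg \<alpha> = mdeg \<alpha>0" for \<alpha>
      using that a0 fA by (auto simp: A_def)
  qed
qed

text \<open>Multi-indices are ordered by total degree and then by their digits in base \<open>B\<close>; for \<open>B\<close>
  large this order is additive and total on the relevant indices, so the product of the lowest
  terms of \<open>a\<close> and \<open>b\<close> is the only contribution to its coefficient in \<open>a * b\<close>.\<close>

lemma ps_mult_nonzero:
  fixes a b :: "('n::finite) ps"
  assumes "a \<noteq> 0" "b \<noteq> 0" shows "a * b \<noteq> 0"
proof -
  obtain \<alpha>1 \<beta>1 where "coef a \<alpha>1 \<noteq> 0" "coef b \<beta>1 \<noteq> 0"
    using ps_nonzero_coef[OF assms(1)] ps_nonzero_coef[OF assms(2)] by blast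
  define B where "B = Suc (mdeg \<alpha>1 + mdeg \<beta>1)"
  obtain \<alpha>0 where a0: "coef a \<alpha>0 \<noteq> 0" "\<And>\<alpha>. coef a \<alpha> \<noteq> 0 \<Longrightarrow> mdeg \<alpha>0 \<le> mdeg \<alpha>"
    "\<And>\<alpha>. coef a \<alpha> \<noteq> 0 \<Longrightarrow> mdeg \<alpha> = mdeg \<alpha>0 \<Longrightarrow> base_code idx_list B \<alpha>0 \<le> base_code idx_list B \<alpha>"
    using ps_lowest_term[OF assms(1), where key="base_code idx_list B"] by blast
  obtain \<beta>0 where b0: "coef b \<beta>0 \<noteq> 0" "\<And>\<alpha>. coef b \<alpha> \<noteq> 0 \<Longrightarrow> mdeg \<beta>0 \<le> mdeg \<alpha>"
    "\<And>\<alpha>. coef b \<alpha> \<noteq> 0 \<Longrightarrow> mdeg \<alpha> = mdeg \<beta>0 \<Longrightarrow> base_code idx_list B \<beta>0 \<le> base_code idx_list B \<alpha>"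
    using ps_lowest_term[OF assms(2), where key="base_code idx_list B"] by blast
  have bound: "mdeg \<alpha>0 + mdeg \<beta>0 < B"
    using a0(2)[OF \<open>coef a \<alpha>1 \<noteq> 0\<close>] b0(2)[OF \<open>coef b \<beta>1 \<noteq> 0\<close>] by (simp add: B_def)
  define \<sigma> where "\<sigma> = (\<lambda>i. \<alpha>0 i + \<beta>0 i)"
  have unique: "\<beta> = \<alpha>0" if \<beta>: "\<beta> \<in> le_set \<sigma>" and na: "coef a \<beta> \<noteq> 0"
    and nb: "coef b (\<lambda>i. \<sigma> i - \<beta> i) \<noteq> 0" for \<beta>
  proof -
    define \<gamma> where "\<gamma> = (\<lambda>i. \<sigma> i - \<beta> i)"
    have sg: "\<sigma> = (\<lambda>i. \<beta> i + \<gamma> i)" using \<beta> by (auto simp: \<gamma>_def le_set_def fun_eq_iff)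
    have "mdeg \<beta> + mdeg \<gamma> = mdeg \<alpha>0 + mdeg \<beta>0"
      using sg by (simp add: \<sigma>_def mdeg_add[symmetric])
    then have d: "mdeg \<beta> = mdeg \<alpha>0" "mdeg \<gamma> = mdeg \<beta>0"
      using a0(2)[OF na] b0(2)[OF nb[folded \<gamma>_def]] by auto
    have "base_code idx_list B \<beta> + base_code idx_list B \<gamma> = base_code idx_list B \<alpha>0 + base_code idx_list B \<beta>0"
      using sg by (simp add: \<sigma>_def base_code_add[symmetric])
    then have "base_code idx_list B \<beta> = base_code idx_list B \<alpha>0"
      using a0(3)[OF na d(1)] b0(3)[OF nb[folded \<gamma>_def] d(2)] by linarith
    moreover have "\<beta> i < B" "\<alpha>0 i < B" for i
      using le_mdeg[of \<beta> i] le_mdeg[of \<alpha>0 i] d bound by linarith+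
    ultimately show ?thesis by (intro base_code_idx_list_inj) auto
  qed
  have "coef (a * b) \<sigma> = (\<Sum>\<beta>\<in>le_set \<sigma>. if \<beta> = \<alpha>0 then coef a \<beta> * coef b (\<lambda>i. \<sigma> i - \<beta> i) else 0)"
    unfolding coef_mult ps_mult_le using unique by (intro sum.cong) auto
  also have "\<dots> = coef a \<alpha>0 * coef b \<beta>0"
    using finite_le_set[of \<sigma>] by (subst sum.delta) (auto simp: \<sigma>_def le_set_def)
  finally show ?thesis using a0(1) b0(1) by (metis coef_zero mult_eq_0_iff ps_zero_def)
qed

instance ps :: (finite) idom
  by standard (use ps_mult_nonzero in blast)

section \<open>Partial derivatives\<close>

definition mind_inc :: "'n \<Rightarrow> 'n mind \<Rightarrow> 'n mind" where "mind_inc i \<alpha> = \<alpha>(i := Suc (\<alpha> i))"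

lift_definition pd :: "'n \<Rightarrow> ('n::finite) ps \<Rightarrow> 'n ps" is ps_pd .

lemma coef_pd: "coef (pd i a) \<alpha> = of_nat (Suc (\<alpha> i)) * coef a (mind_inc i \<alpha>)"
  by transfer (simp add: ps_pd_def mind_inc_def)

lemma pd_add[simp]: "pd i (a + b) = pd i a + pd i b"
  by (rule coef_inject[THEN iffD1]) (simp add: fun_eq_iff coef_pd algebra_simps)
lemma pd_uminus[simp]: "pd i (- a) = - pd i a"
  by (rule coef_inject[THEN iffD1]) (simp add: fun_eq_iff coef_pd algebra_simps)
lemma pd_diff[simp]: "pd i (a - b) = pd i a - pd i b"
  by (rule coef_inject[THEN iffD1]) (simp add: fun_eq_iff coef_pd algebra_simps)
lemma pd_zero[simp]: "pd i 0 = 0"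
  by (rule coef_inject[THEN iffD1]) (simp add: fun_eq_iff coef_pd ps_zero_def)
lemma mind_inc_ne_mi0[simp]: "mind_inc i \<alpha> \<noteq> mi0"
  by (metis fun_upd_same nat.distinct(1) mi0_def mind_inc_def)
lemma pd_one[simp]: "pd i 1 = 0"
  by (rule coef_inject[THEN iffD1], rule ext) (simp add: coef_pd ps_zero_def ps_one_def)
lemma pd_sum: "pd i (sum F A) = (\<Sum>x\<in>A. pd i (F x))"
  by (induction A rule: infinite_finite_induct) auto

lemma pd_mult: "pd i (a * b) = pd i a * b + a * (pd i (b::('n::finite) ps))"
proof (rule coef_inject[THEN iffD1], rule ext)
  fix \<alpha>
  define \<alpha>' where "\<alpha>' = mind_inc i \<alpha>"
  define t where "t = (\<lambda>\<beta>. coef a \<beta> * coef b (\<lambda>j. \<alpha>' j - \<beta> j))"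
  have L: "le_set \<alpha> \<subseteq> le_set \<alpha>'" by (auto simp: le_set_def \<alpha>'_def mind_inc_def le_SucI)
  have c1: "coef (pd i a * b) \<alpha> = (\<Sum>\<beta>\<in>le_set \<alpha>'. of_nat (\<beta> i) * t \<beta>)"
  proof -
    have "coef (pd i a * b) \<alpha> = (\<Sum>\<beta>\<in>le_set \<alpha>. of_nat (Suc (\<beta> i)) * t (mind_inc i \<beta>))"
      unfolding coef_mult ps_mult_le t_def coef_pd
      by (rule sum.cong) (auto simp: le_set_def \<alpha>'_def mind_inc_def mult.assoc intro!: arg_cong[where f="coef b"])
    also have "\<dots> = (\<Sum>\<beta>\<in>{\<beta>\<in>le_set \<alpha>'. \<beta> i \<noteq> 0}. of_nat (\<beta> i) * t \<beta>)"
      by (rule sum.reindex_bij_witness[where i="\<lambda>\<beta>. \<beta>(i := \<beta> i - 1)" and j="mind_inc i"])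
         (auto simp: mind_inc_def le_set_def \<alpha>'_def split: if_splits)
    also have "\<dots> = (\<Sum>\<beta>\<in>le_set \<alpha>'. of_nat (\<beta> i) * t \<beta>)"
      by (rule sum.mono_neutral_left) auto
    finally show ?thesis .
  qed
  have c2: "coef (a * pd i b) \<alpha> = (\<Sum>\<beta>\<in>le_set \<alpha>'. of_nat (\<alpha>' i - \<beta> i) * t \<beta>)"
  proof -
    have "coef (a * pd i b) \<alpha> = (\<Sum>\<beta>\<in>le_set \<alpha>. of_nat (\<alpha>' i - \<beta> i) * t \<beta>)"
      unfolding coef_mult ps_mult_le t_def coef_pd
      by (rule sum.cong) (auto simp: le_set_def \<alpha>'_def mind_inc_def Suc_diff_le intro!: arg_cong[where f="coef b"])
    also have "\<dots> = (\<Sum>\<beta>\<in>le_set \<alpha>'. of_nat (\<alpha>' i - \<beta> i) * t \<beta>)"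
    proof (rule sum.mono_neutral_left[OF _ L])
      show "\<forall>\<beta>\<in>le_set \<alpha>' - le_set \<alpha>. of_nat (\<alpha>' i - \<beta> i) * t \<beta> = 0"
      proof
        fix \<beta> assume "\<beta> \<in> le_set \<alpha>' - le_set \<alpha>"
        then have "\<beta> i = \<alpha>' i" by (auto simp: le_set_def \<alpha>'_def mind_inc_def split: if_splits) (metis le_SucE)
        then show "of_nat (\<alpha>' i - \<beta> i) * t \<beta> = 0" by simp
      qed
    qed simp
    finally show ?thesis .
  qed
  have "coef (pd i (a * b)) \<alpha> = (\<Sum>\<beta>\<in>le_set \<alpha>'. of_nat (\<alpha>' i) * t \<beta>)"
    by (simp add: coef_pd coef_mult ps_mult_le t_def \<alpha>'_def sum_distrib_left mind_inc_def)
  also have "\<dots> = (\<Sum>\<beta>\<in>le_set \<alpha>'. of_nat (\<beta> i) * t \<beta> + of_nat (\<alpha>' i - \<beta> i) * t \<beta>)"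
    by (rule sum.cong) (auto simp: le_set_def algebra_simps simp flip: distrib_right of_nat_add)
  also have "\<dots> = coef (pd i a * b + a * pd i b) \<alpha>"
    by (simp add: c1 c2 sum.distrib)
  finally show "coef (pd i (a * b)) \<alpha> = coef (pd i a * b + a * pd i b) \<alpha>" .
qed

lemma pd_power: "pd i (a ^ Suc n) = of_nat (Suc n) * a ^ n * pd i a"
  by (induction n) (auto simp: pd_mult algebra_simps)

lemma pd_of_nat[simp]: "pd i (of_nat n) = 0"
  by (induction n) auto

lemma ps_pd_coef: "ps_pd i f = coef (pd i (Ps f))" by (simp add: pd.rep_eq)

lemma pd_pow_const[simp]: "pd i c = 0 \<Longrightarrow> pd i (c ^ n) = 0"
  by (induction n) (auto simp: pd_mult)

lift_definition pdm :: "('n::finite) mind \<Rightarrow> 'n ps \<Rightarrow> 'n ps" is ps_pdm .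

lemma coef_pdm: "coef (pdm \<alpha> a) \<beta> = (\<Prod>i\<in>UNIV. pochhammer (of_nat (\<beta> i + 1)) (\<alpha> i)) * coef a (\<lambda>i. \<beta> i + \<alpha> i)"
  by transfer (simp add: ps_pdm_def)

lemma pdm_mi0[simp]: "pdm mi0 a = a"
  by (rule coef_inject[THEN iffD1], rule ext) (simp add: coef_pdm mi0_def)

lemma pdm_pdm: "pdm \<alpha> (pdm \<beta> a) = pdm (\<lambda>i. \<alpha> i + \<beta> i) a"
proof (rule coef_inject[THEN iffD1], rule ext)
  fix \<gamma>
  have "(\<Prod>i\<in>UNIV. pochhammer (of_nat (\<gamma> i + 1) :: complex) (\<alpha> i)) *
        (\<Prod>i\<in>UNIV. pochhammer (of_nat (\<gamma> i + \<alpha> i + 1)) (\<beta> i))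
      = (\<Prod>i\<in>UNIV. pochhammer (of_nat (\<gamma> i + 1)) (\<alpha> i + \<beta> i))"
    by (simp add: prod.distrib[symmetric] pochhammer_product' algebra_simps)
  then show "coef (pdm \<alpha> (pdm \<beta> a)) \<gamma> = coef (pdm (\<lambda>i. \<alpha> i + \<beta> i) a) \<gamma>"
    by (simp add: coef_pdm add.assoc mult.assoc)
qed

lemma pdm_add[simp]: "pdm \<alpha> (a + b) = pdm \<alpha> a + pdm \<alpha> b"
  by (rule coef_inject[THEN iffD1], rule ext) (simp add: coef_pdm algebra_simps)
lemma pdm_zero[simp]: "pdm \<alpha> 0 = 0"
  by (rule coef_inject[THEN iffD1], rule ext) (simp add: coef_pdm ps_zero_def)
lemma pdm_sum: "pdm \<alpha> (sum F A) = (\<Sum>x\<in>A. pdm \<alpha> (F x))"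
  by (induction A rule: infinite_finite_induct) auto

definition ei :: "'n \<Rightarrow> 'n mind" where "ei i = (\<lambda>j. if j = i then 1 else 0)"

lemma pd_pdm: "pd i a = pdm (ei i) a"
proof (rule coef_inject[THEN iffD1], rule ext)
  fix \<beta>
  have "(\<Prod>j\<in>UNIV. pochhammer (of_nat (\<beta> j + 1) :: complex) (ei i j)) = (\<Prod>j\<in>UNIV. if j = i then of_nat (Suc (\<beta> i)) else 1)"
    by (rule prod.cong) (auto simp: ei_def)
  also have "\<dots> = of_nat (Suc (\<beta> i))" by (simp add: prod.delta)
  finally show "coef (pd i a) \<beta> = coef (pdm (ei i) a) \<beta>"
    by (simp add: coef_pd coef_pdm mind_inc_def ei_def) (auto intro!: arg_cong[where f="coef a"])
qed

lemma pd_pow_pdm: "(pd i ^^ n) a = pdm (\<lambda>j. if j = i then n else 0) a"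
proof (induction n)
  case 0 then show ?case by (simp add: mi0_def[symmetric])
next
  case (Suc n)
  then show ?case by (simp add: pd_pdm pdm_pdm ei_def) (auto intro!: arg_cong2[where f=pdm])
qed

lemma fold_pd: "distinct xs \<Longrightarrow> fold (\<lambda>i. pd i ^^ \<alpha> i) xs a = pdm (\<lambda>j. if j \<in> set xs then \<alpha> j else 0) a"
proof (induction xs arbitrary: a)
  case Nil then show ?case by (simp add: mi0_def[symmetric])
next
  case (Cons x xs)
  then show ?case by (simp add: pd_pow_pdm pdm_pdm) (auto intro!: arg_cong2[where f=pdm])
qed

lemma iter_pd_pdm: "iter_pd pd \<alpha> a = pdm \<alpha> a"
  unfolding iter_pd_def by (simp add: fold_pd)

lemma pdm_mind_inc: "pdm (mind_inc i \<alpha>) a = pd i (pdm \<alpha> a)"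
  by (simp add: pd_pdm pdm_pdm mind_inc_def ei_def) (auto intro!: arg_cong2[where f=pdm])

lemma fold_iter_rel:
  assumes "\<And>i x y. R x y \<Longrightarrow> R (d1 i x) (d2 i y)" "R x y"
  shows "R (fold (\<lambda>i. d1 i ^^ \<alpha> i) xs x) (fold (\<lambda>i. d2 i ^^ \<alpha> i) xs y)"
proof -
  have pw: "R ((d1 i ^^ n) x) ((d2 i ^^ n) y)" if "R x y" for i n x y
    using that by (induction n) (auto intro: assms(1))
  show ?thesis using assms(2) by (induction xs arbitrary: x y) (auto intro: pw)
qed

lemma iter_pd_rel:
  assumes "\<And>i x y. R x y \<Longrightarrow> R (d1 i x) (d2 i y)" "R x y"
  shows "R (iter_pd d1 \<alpha> x) (iter_pd d2 \<alpha> y)"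
  unfolding iter_pd_def by (rule fold_iter_rel[where R=R, OF assms])

lemma fold_iter_count:
  assumes "\<And>i x. c (d i x) = Suc (c x)" "distinct xs"
  shows "c (fold (\<lambda>i. d i ^^ \<alpha> i) xs x) = c x + (\<Sum>i\<in>set xs. \<alpha> i)"
proof -
  have pw: "c ((d i ^^ n) x) = c x + n" for i n x
    by (induction n) (auto simp: assms(1))
  show ?thesis using assms(2) by (induction xs arbitrary: x) (auto simp: pw)
qed

lemma iter_pd_count:
  assumes "\<And>i x. c (d i x) = Suc (c x)"
  shows "c (iter_pd d \<alpha> x) = c x + mdeg \<alpha>"
  unfolding iter_pd_def mdeg_def using fold_iter_count[where c=c and d=d, OF assms, of idx_list] by simp

lemma iter_pd_mi0[simp]: "iter_pd d mi0 x = x"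
proof -
  have "fold (\<lambda>i. d i ^^ mi0 i) xs x = x" for xs by (induction xs) (auto simp: mi0_def)
  then show ?thesis by (simp add: iter_pd_def)
qed

lemma iter_pd_ei[simp]: "iter_pd d (ei i) x = d i x"
proof -
  have "fold (\<lambda>j. d j ^^ ei i j) xs x = (if i \<in> set xs then d i x else x)" if "distinct xs" for xs x
    using that
  proof (induction xs arbitrary: x)
    case Nil then show ?case by simp
  next
    case (Cons y xs)
    show ?case
    proof (cases "y = i")
      case True
      have "fold (\<lambda>j. d j ^^ ei i j) xs z = z" for z
        using Cons.prems True by (induction xs arbitrary: z) (auto simp: ei_def)
      then show ?thesis using True by (simp add: ei_def)
    next
      case False then show ?thesis using Cons by (simp add: ei_def)
    qed
  qed
  then show ?thesis unfolding iter_pd_def by simp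
qed

section \<open>Convergence\<close>

lemma prod_pow_mdeg: "(\<Prod>i\<in>UNIV. r ^ \<alpha> i) = (r::real) ^ mdeg (\<alpha>::('n::finite) mind)"
  by (simp add: mdeg_def power_sum)

lemma convergent_ps_iff_mdeg: "convergent_ps c \<longleftrightarrow> (\<exists>r>0. (\<lambda>\<alpha>. norm (c \<alpha>) * r ^ mdeg \<alpha>) summable_on UNIV)"
  by (simp add: convergent_ps_def prod_pow_mdeg)

lemma summable_radius_mono:
  assumes "(\<lambda>\<alpha>. norm (c \<alpha>) * r ^ mdeg \<alpha>) summable_on UNIV" "0 < r'" "r' \<le> r"
  shows "(\<lambda>\<alpha>. norm (c \<alpha>) * r' ^ mdeg (\<alpha>::('n::finite) mind)) summable_on UNIV"
  by (rule summable_on_comparison_test[OF assms(1)])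
     (use assms in \<open>auto intro!: mult_left_mono power_mono\<close>)

lemma convergent_ps_common_radius:
  assumes "convergent_ps f" "convergent_ps (g::('n::finite) cps)"
  obtains r where "r > 0" "(\<lambda>\<alpha>. norm (f \<alpha>) * r ^ mdeg \<alpha>) summable_on UNIV"
    "(\<lambda>\<alpha>. norm (g \<alpha>) * r ^ mdeg \<alpha>) summable_on UNIV"
proof -
  obtain r1 r2 where r: "r1 > 0" "r2 > 0" "(\<lambda>\<alpha>. norm (f \<alpha>) * r1 ^ mdeg \<alpha>) summable_on UNIV"
    "(\<lambda>\<alpha>. norm (g \<alpha>) * r2 ^ mdeg \<alpha>) summable_on UNIV" using assms by (auto simp: convergent_ps_iff_mdeg)
  show ?thesis
    by (rule that[of "min r1 r2"]) (use r in \<open>auto intro: summable_radius_mono\<close>)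
qed

lemma convergent_ps_add:
  assumes "convergent_ps f" "convergent_ps (g::('n::finite) cps)"
  shows "convergent_ps (\<lambda>\<alpha>. f \<alpha> + g \<alpha>)"
proof -
  obtain r where r: "r > 0" "(\<lambda>\<alpha>. norm (f \<alpha>) * r ^ mdeg \<alpha>) summable_on UNIV"
    "(\<lambda>\<alpha>. norm (g \<alpha>) * r ^ mdeg \<alpha>) summable_on UNIV" using convergent_ps_common_radius[OF assms] by metis
  have "(\<lambda>\<alpha>. norm (f \<alpha>) * r ^ mdeg \<alpha> + norm (g \<alpha>) * r ^ mdeg \<alpha>) summable_on UNIV"
    by (rule summable_on_add[OF r(2,3)])
  then have "(\<lambda>\<alpha>. norm (f \<alpha> + g \<alpha>) * r ^ mdeg \<alpha>) summable_on UNIV"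
    by (rule summable_on_comparison_test)
       (use r(1) in \<open>auto simp: distrib_right[symmetric] intro!: mult_right_mono norm_triangle_ineq\<close>)
  then show ?thesis using r(1) by (auto simp: convergent_ps_iff_mdeg)
qed

lemma convergent_ps_scale:
  assumes "convergent_ps (f::('n::finite) cps)"
  shows "convergent_ps (\<lambda>\<alpha>. c * f \<alpha>)"
proof -
  obtain r where r: "r > 0" "(\<lambda>\<alpha>. norm (f \<alpha>) * r ^ mdeg \<alpha>) summable_on UNIV" using assms by (auto simp: convergent_ps_iff_mdeg)
  have "(\<lambda>\<alpha>. norm c * (norm (f \<alpha>) * r ^ mdeg \<alpha>)) summable_on UNIV" by (rule summable_on_cmult_right[OF r(2)])
  then show ?thesis using r(1) by (auto simp: convergent_ps_iff_mdeg norm_mult mult.assoc)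
qed

lemma convergent_ps_finite_support:
  assumes "finite {\<alpha>. f \<alpha> \<noteq> 0}" shows "convergent_ps (f::('n::finite) cps)"
proof -
  have "(\<lambda>\<alpha>. norm (f \<alpha>) * 1 ^ mdeg \<alpha>) summable_on {\<alpha>. f \<alpha> \<noteq> 0}"
    by (rule summable_on_finite) (use assms in auto)
  then have "(\<lambda>\<alpha>. norm (f \<alpha>) * 1 ^ mdeg \<alpha>) summable_on UNIV"
    by (subst (asm) summable_on_cong_neutral[where T=UNIV and g="\<lambda>\<alpha>. norm (f \<alpha>) * 1 ^ mdeg \<alpha>"]) auto
  then show ?thesis by (auto simp: convergent_ps_iff_mdeg intro!: exI[of _ 1])
qed

lemma norm_ps_mult_weighted_le:
  fixes f g :: "('n::finite) cps" and r :: real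
  assumes "r \<ge> 0"
  shows "norm (ps_mult f g \<alpha>) * r ^ mdeg \<alpha> \<le> (\<Sum>\<beta>\<in>le_set \<alpha>.
    (norm (f \<beta>) * r ^ mdeg \<beta>) * (norm (g (\<lambda>i. \<alpha> i - \<beta> i)) * r ^ mdeg (\<lambda>i. \<alpha> i - \<beta> i)))"
proof -
  have "norm (ps_mult f g \<alpha>) * r ^ mdeg \<alpha> \<le> (\<Sum>\<beta>\<in>le_set \<alpha>. norm (f \<beta> * g (\<lambda>i. \<alpha> i - \<beta> i))) * r ^ mdeg \<alpha>"
    unfolding ps_mult_le using assms by (intro mult_right_mono norm_sum) auto
  also have "\<dots> = (\<Sum>\<beta>\<in>le_set \<alpha>.
      (norm (f \<beta>) * r ^ mdeg \<beta>) * (norm (g (\<lambda>i. \<alpha> i - \<beta> i)) * r ^ mdeg (\<lambda>i. \<alpha> i - \<beta> i)))"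
    unfolding sum_distrib_right
  proof (rule sum.cong[OF refl])
    fix \<beta> assume "\<beta> \<in> le_set \<alpha>"
    then have "mdeg \<alpha> = mdeg \<beta> + mdeg (\<lambda>i. \<alpha> i - \<beta> i)"
      by (simp add: mdeg_add[symmetric] le_set_def)
    then show "norm (f \<beta> * g (\<lambda>i. \<alpha> i - \<beta> i)) * r ^ mdeg \<alpha>
        = (norm (f \<beta>) * r ^ mdeg \<beta>) * (norm (g (\<lambda>i. \<alpha> i - \<beta> i)) * r ^ mdeg (\<lambda>i. \<alpha> i - \<beta> i))"
      by (simp add: norm_mult power_add)
  qed
  finally show ?thesis .
qed

lemma convergent_ps_mult:
  assumes "convergent_ps f" "convergent_ps (g::('n::finite) cps)"
  shows "convergent_ps (ps_mult f g)"
proof -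
  obtain r where r: "r > 0" "(\<lambda>\<alpha>. norm (f \<alpha>) * r ^ mdeg \<alpha>) summable_on UNIV"
    "(\<lambda>\<alpha>. norm (g \<alpha>) * r ^ mdeg \<alpha>) summable_on UNIV" using convergent_ps_common_radius[OF assms] by metis
  define a where "a = (\<lambda>\<alpha>. norm (f \<alpha>) * r ^ mdeg \<alpha>)"
  define b where "b = (\<lambda>\<alpha>. norm (g \<alpha>) * r ^ mdeg \<alpha>)"
  have a0: "a x \<ge> 0" "b x \<ge> 0" for x using r(1) by (auto simp: a_def b_def)
  have bound: "(\<Sum>\<alpha>\<in>F. norm (ps_mult f g \<alpha>) * r ^ mdeg \<alpha>) \<le> infsum a UNIV * infsum b UNIV" if F: "finite F" for F
  proof -
    define B where "B = (\<Union>\<alpha>\<in>F. le_set \<alpha>)"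
    have fB: "finite B" using F by (auto simp: B_def)
    have "(\<Sum>\<alpha>\<in>F. norm (ps_mult f g \<alpha>) * r ^ mdeg \<alpha>) \<le> (\<Sum>\<alpha>\<in>F. \<Sum>\<beta>\<in>le_set \<alpha>. a \<beta> * b (\<lambda>i. \<alpha> i - \<beta> i))"
      unfolding a_def b_def using r(1) by (intro sum_mono norm_ps_mult_weighted_le) simp
    also have "\<dots> = (\<Sum>(\<alpha>,\<beta>)\<in>Sigma F le_set. a \<beta> * b (\<lambda>i. \<alpha> i - \<beta> i))"
      using F by (simp add: sum.Sigma)
    also have "\<dots> = (\<Sum>p\<in>(\<lambda>(\<alpha>,\<beta>). (\<beta>, \<lambda>i. \<alpha> i - \<beta> i)) ` Sigma F le_set. a (fst p) * b (snd p))"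
    proof (subst sum.reindex)
      show "inj_on (\<lambda>(\<alpha>, \<beta>). (\<beta>, \<lambda>i. \<alpha> i - \<beta> i)) (Sigma F le_set)"
        by (auto simp: inj_on_def le_set_def fun_eq_iff) (metis le_add_diff_inverse2)
    qed (auto simp: case_prod_beta intro!: sum.cong)
    also have "\<dots> \<le> (\<Sum>p\<in>B \<times> B. a (fst p) * b (snd p))"
      by (rule sum_mono2) (use fB a0 in \<open>auto simp: B_def le_set_def\<close>)
    also have "\<dots> = sum a B * sum b B"
      by (simp add: sum_product sum.cartesian_product case_prod_beta)
    also have "\<dots> \<le> infsum a UNIV * infsum b UNIV"
      using a0 fB r unfolding a_def b_def
      by (intro mult_mono finite_sum_le_infsum sum_nonneg infsum_nonneg) (auto simp: a_def b_def)
    finally show ?thesis .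
  qed
  have "(\<lambda>\<alpha>. norm (ps_mult f g \<alpha>) * r ^ mdeg \<alpha>) summable_on UNIV"
    by (rule nonneg_bdd_above_summable_on) (use r(1) bound in \<open>auto intro!: bdd_aboveI2\<close>)
  then show ?thesis using r(1) by (auto simp: convergent_ps_iff_mdeg)
qed

lemma mdeg_mind_inc: "mdeg (mind_inc i \<alpha>) = Suc (mdeg (\<alpha>::('n::finite) mind))"
proof -
  have "mind_inc i \<alpha> = (\<lambda>j. \<alpha> j + ei i j)" by (auto simp: mind_inc_def ei_def fun_eq_iff)
  moreover have "mdeg (ei i :: 'n mind) = 1" by (simp add: mdeg_def ei_def)
  ultimately show ?thesis by (simp add: mdeg_add)
qed

lemma norm_one_plus_of_nat: "cmod (1 + of_nat n) = 1 + real n"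
  by (metis norm_of_nat of_nat_Suc of_real_of_nat_eq)

lemma convergent_ps_pd:
  assumes "convergent_ps (f::('n::finite) cps)"
  shows "convergent_ps (ps_pd i f)"
proof -
  obtain r where r: "r > 0" "(\<lambda>\<alpha>. norm (f \<alpha>) * r ^ mdeg \<alpha>) summable_on UNIV" using assms by (auto simp: convergent_ps_iff_mdeg)
  have inj: "inj (mind_inc i)" unfolding inj_on_def mind_inc_def fun_eq_iff by (metis fun_upd_apply nat.inject)
  have "(\<lambda>\<alpha>. norm (f \<alpha>) * r ^ mdeg \<alpha>) summable_on range (mind_inc i)"
    by (rule summable_on_subset[OF r(2)]) auto
  then have "((\<lambda>\<alpha>. norm (f \<alpha>) * r ^ mdeg \<alpha>) \<circ> mind_inc i) summable_on UNIV"
    using summable_on_reindex[OF inj] by blast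
  then have s: "(\<lambda>\<alpha>. (1/r) * (norm (f (mind_inc i \<alpha>)) * r ^ mdeg (mind_inc i \<alpha>))) summable_on UNIV"
    by (intro summable_on_cmult_right) (simp add: o_def)
  have "(\<lambda>\<alpha>. norm (ps_pd i f \<alpha>) * (r/2) ^ mdeg \<alpha>) summable_on UNIV"
  proof (rule summable_on_comparison_test[OF s])
    fix \<alpha> :: "'n mind"
    have "real (Suc (\<alpha> i)) \<le> 2 ^ mdeg \<alpha>"
    proof -
      have "Suc (\<alpha> i) \<le> Suc (mdeg \<alpha>)" using le_mdeg[of \<alpha> i] by simp
      also have "\<dots> \<le> 2 ^ mdeg \<alpha>" by (simp add: Suc_leI less_exp)
      finally show ?thesis by (metis of_nat_le_iff of_nat_numeral of_nat_power)
    qed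
    then have "real (Suc (\<alpha> i)) * (r/2) ^ mdeg \<alpha> \<le> 2 ^ mdeg \<alpha> * (r/2) ^ mdeg \<alpha>"
      using r(1) by (intro mult_right_mono) auto
    also have "\<dots> = r ^ mdeg \<alpha>" by (simp add: power_mult_distrib[symmetric])
    finally have *: "real (Suc (\<alpha> i)) * (r/2) ^ mdeg \<alpha> \<le> r ^ mdeg \<alpha>" .
    have "norm (ps_pd i f \<alpha>) * (r/2) ^ mdeg \<alpha> = norm (f (mind_inc i \<alpha>)) * (real (Suc (\<alpha> i)) * (r/2) ^ mdeg \<alpha>)"
      by (simp add: ps_pd_def mind_inc_def norm_mult norm_one_plus_of_nat)
    also have "\<dots> \<le> norm (f (mind_inc i \<alpha>)) * r ^ mdeg \<alpha>" by (intro mult_left_mono *) auto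
    also have "\<dots> = (1/r) * (norm (f (mind_inc i \<alpha>)) * r ^ mdeg (mind_inc i \<alpha>))" using r(1) by (simp add: mdeg_mind_inc)
    finally show "norm (ps_pd i f \<alpha>) * (r/2) ^ mdeg \<alpha> \<le> (1/r) * (norm (f (mind_inc i \<alpha>)) * r ^ mdeg (mind_inc i \<alpha>))" .
    show "0 \<le> norm (ps_pd i f \<alpha>) * (r/2) ^ mdeg \<alpha>" using r(1) by simp
  qed
  then show ?thesis using r(1) by (auto simp: convergent_ps_iff_mdeg intro!: exI[of _ "r/2"])
qed

definition conv_ps :: "('n::finite) ps \<Rightarrow> bool" where "conv_ps a \<longleftrightarrow> convergent_ps (coef a)"

lemma conv_ps_add[intro]: "conv_ps a \<Longrightarrow> conv_ps b \<Longrightarrow> conv_ps (a + b)"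
  unfolding conv_ps_def using convergent_ps_add[of "coef a" "coef b"] by (simp add: plus_ps.rep_eq)
lemma conv_ps_mult[intro]: "conv_ps a \<Longrightarrow> conv_ps b \<Longrightarrow> conv_ps (a * b)"
  unfolding conv_ps_def by (simp add: coef_mult convergent_ps_mult)
lemma conv_ps_pd[intro]: "conv_ps a \<Longrightarrow> conv_ps (pd i a)"
  unfolding conv_ps_def by (simp add: pd.rep_eq convergent_ps_pd)
lemma conv_ps_uminus[intro]: "conv_ps a \<Longrightarrow> conv_ps (- a)"
  unfolding conv_ps_def using convergent_ps_scale[of "coef a" "-1"] by (simp add: uminus_ps.rep_eq)
lemma conv_ps_zero[intro]: "conv_ps 0"
  unfolding conv_ps_def by (rule convergent_ps_finite_support) (simp add: ps_zero_def)
lemma conv_ps_one[intro]: "conv_ps 1"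
  unfolding conv_ps_def by (rule convergent_ps_finite_support) (simp add: ps_one_def)
lemma conv_ps_of_nat[intro]: "conv_ps (of_nat n)"
  by (induction n) auto
lemma conv_ps_power[intro]: "conv_ps a \<Longrightarrow> conv_ps (a ^ n)"
  by (induction n) auto
lemma conv_ps_sum[intro]: "(\<And>x. x \<in> A \<Longrightarrow> conv_ps (F x)) \<Longrightarrow> conv_ps (sum F A)"
  by (induction A rule: infinite_finite_induct) auto
lemma conv_ps_pdm[intro]: "conv_ps a \<Longrightarrow> conv_ps (pdm \<alpha> a)"
proof -
  assume a: "conv_ps a"
  have "(\<lambda>x y. x = y \<and> conv_ps x) (iter_pd pd \<alpha> a) (iter_pd pd \<alpha> a)"
    by (rule iter_pd_rel) (use a in auto)
  then show ?thesis by (simp add: iter_pd_pdm)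
qed

lift_definition cst :: "complex \<Rightarrow> ('n::finite) ps" is "\<lambda>c \<alpha>. if \<alpha> = mi0 then c else 0" .

lemma coef_cst_mult: "coef (cst c * a) \<beta> = c * coef a \<beta>"
proof -
  have e: "coef (cst c) = (\<lambda>\<alpha>. c * ps_one \<alpha>)"
    by (auto simp: cst.rep_eq ps_one_def fun_eq_iff)
  have "coef (cst c * a) = ps_mult (coef a) (\<lambda>\<alpha>. c * ps_one \<alpha>)"
    by (simp only: coef_mult e ps_mult_comm[of "\<lambda>\<alpha>. c * ps_one \<alpha>"])
  also have "\<dots> = (\<lambda>\<beta>. c * coef a \<beta>)" 
    by (simp add: ps_mult_scale ps_mult_comm[of _ ps_one] ps_mult_one)
  finally show ?thesis by simp
qed

lemma conv_ps_cst[intro]: "conv_ps (cst c)"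
  unfolding conv_ps_def by (rule convergent_ps_finite_support) (simp add: cst.rep_eq)

lemma conv_ps_Ps: "convergent_ps f \<Longrightarrow> conv_ps (Ps f)"
  by (simp add: conv_ps_def)

section \<open>Differential operators acting on power series\<close>

definition mchoose :: "('n::finite) mind \<Rightarrow> 'n mind \<Rightarrow> nat" where
  "mchoose \<alpha> \<gamma> = (\<Prod>i\<in>UNIV. \<alpha> i choose \<gamma> i)"

definition msub :: "'n mind \<Rightarrow> 'n mind \<Rightarrow> 'n mind" where
  "msub \<alpha> \<gamma> = (\<lambda>i. \<alpha> i - \<gamma> i)"

definition madd :: "'n mind \<Rightarrow> 'n mind \<Rightarrow> 'n mind" where
  "madd \<alpha> \<gamma> = (\<lambda>i. \<alpha> i + \<gamma> i)"

definition mind_dec :: "'n \<Rightarrow> 'n mind \<Rightarrow> 'n mind" where "mind_dec i \<alpha> = \<alpha>(i := \<alpha> i - 1)"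

lemma mchoose_mind_inc:
  fixes i :: "'n::finite" and \<alpha> \<gamma> :: "'n mind"
  shows "mchoose (mind_inc i \<alpha>) \<gamma> = mchoose \<alpha> \<gamma> + (if \<gamma> i = 0 then 0 else mchoose \<alpha> (mind_dec i \<gamma>))"
proof -
  have split: "(\<Prod>j\<in>UNIV. f j) = f i * (\<Prod>j\<in>UNIV-{i}. f j)" for f :: "'n \<Rightarrow> nat"
    by (simp add: prod.remove)
  have o1: "(\<Prod>j\<in>UNIV-{i}. mind_inc i \<alpha> j choose \<gamma> j) = (\<Prod>j\<in>UNIV-{i}. \<alpha> j choose \<gamma> j)"
    by (rule prod.cong) (auto simp: mind_inc_def)
  have o2: "(\<Prod>j\<in>UNIV-{i}. \<alpha> j choose mind_dec i \<gamma> j) = (\<Prod>j\<in>UNIV-{i}. \<alpha> j choose \<gamma> j)"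
    by (rule prod.cong) (auto simp: mind_dec_def)
  show ?thesis
  proof (cases "\<gamma> i")
    case 0 then show ?thesis
      unfolding mchoose_def by (subst (1 2) split) (simp add: o1 mind_inc_def)
  next
    case (Suc k)
    have "Suc (\<alpha> i) choose \<gamma> i = (\<alpha> i choose \<gamma> i) + (\<alpha> i choose mind_dec i \<gamma> i)"
      using Suc by (simp add: mind_dec_def)
    then show ?thesis using Suc
      unfolding mchoose_def by (subst (1 2 3) split) (simp add: o1 o2 mind_inc_def algebra_simps)
  qed
qed

lemma mchoose_zero: "\<not> (\<forall>i. \<gamma> i \<le> \<alpha> i) \<Longrightarrow> mchoose \<alpha> \<gamma> = 0"
  by (auto simp: mchoose_def not_le)

lemma mchoose_mi0[simp]: "mchoose \<alpha> mi0 = 1"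
  by (simp add: mchoose_def mi0_def)

lemma mi0_or_mind_inc: "\<alpha> = mi0 \<or> (\<exists>i \<alpha>'. \<alpha> = mind_inc i \<alpha>')"
proof (cases "\<exists>i. \<alpha> i \<noteq> 0")
  case True
  then obtain i where "\<alpha> i \<noteq> 0" by auto
  then have "\<alpha> = mind_inc i (mind_dec i \<alpha>)" by (auto simp: mind_inc_def mind_dec_def fun_eq_iff)
  then show ?thesis by blast
qed (auto simp: mi0_def fun_eq_iff)

lemma mind_dec_le_set: "\<gamma> \<in> le_set (mind_inc i \<alpha>) \<Longrightarrow> \<gamma> i \<noteq> 0 \<Longrightarrow> mind_dec i \<gamma> \<in> le_set \<alpha>"
  unfolding le_set_def mind_inc_def mind_dec_def
proof (intro CollectI allI)
  fix j assume a: "\<gamma> \<in> {\<beta>. \<forall>i'. \<beta> i' \<le> (\<alpha>(i := Suc (\<alpha> i))) i'}" "\<gamma> i \<noteq> 0"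
  show "(\<gamma>(i := \<gamma> i - 1)) j \<le> \<alpha> j"
  proof (cases "j = i")
    case True
    have "\<gamma> i \<le> Suc (\<alpha> i)" using a(1) by (auto dest: spec[of _ i])
    then show ?thesis using True by simp
  next
    case False
    then show ?thesis using a(1) by (auto dest: spec[of _ j])
  qed
qed
lemma mind_inc_le_set: "\<gamma> \<in> le_set \<alpha> \<Longrightarrow> mind_inc i \<gamma> \<in> le_set (mind_inc i \<alpha>)"
  unfolding le_set_def mind_inc_def by auto
lemma mind_inc_dec: "\<gamma> i \<noteq> 0 \<Longrightarrow> mind_inc i (mind_dec i \<gamma>) = \<gamma>"
  unfolding mind_inc_def mind_dec_def by auto
lemma mind_dec_inc: "mind_dec i (mind_inc i \<gamma>) = \<gamma>"
  unfolding mind_inc_def mind_dec_def by auto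
lemma mind_inc_same[simp]: "mind_inc i \<gamma> i = Suc (\<gamma> i)"
  unfolding mind_inc_def by auto
lemma msub_mind_inc: "msub (mind_inc i \<alpha>) (mind_inc i \<gamma>) = msub \<alpha> \<gamma>"
  unfolding mind_inc_def msub_def by auto

lemma pdm_mult_leibniz:
  "pdm \<alpha> (a * b) = (\<Sum>\<gamma>\<in>le_set \<alpha>. of_nat (mchoose \<alpha> \<gamma>) * pdm \<gamma> a * pdm (msub \<alpha> \<gamma>) (b::('n::finite) ps))"
proof (induction "mdeg \<alpha>" arbitrary: \<alpha>)
  case 0
  then have "\<alpha> = mi0" using mi0_or_mind_inc[of \<alpha>] by (auto simp: mdeg_mind_inc)
  then show ?case by (simp add: le_set_mi0 msub_def mi0_def[symmetric])
next
  case (Suc d)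
  then obtain i \<alpha>' where a: "\<alpha> = mind_inc i \<alpha>'" using mi0_or_mind_inc[of \<alpha>] by (auto simp: mi0_def mdeg_def)
  then have d: "d = mdeg \<alpha>'" using Suc by (simp add: mdeg_mind_inc)
  define T where "T = (\<lambda>\<gamma>. pdm \<gamma> a * pdm (msub (mind_inc i \<alpha>') \<gamma>) b)"
  have "pdm \<alpha> (a * b) = pd i (pdm \<alpha>' (a * b))" by (simp add: a pdm_mind_inc)
  also have "\<dots> = (\<Sum>\<gamma>\<in>le_set \<alpha>'. of_nat (mchoose \<alpha>' \<gamma>) * (pdm (mind_inc i \<gamma>) a * pdm (msub \<alpha>' \<gamma>) b))
      + (\<Sum>\<gamma>\<in>le_set \<alpha>'. of_nat (mchoose \<alpha>' \<gamma>) * (pdm \<gamma> a * pdm (mind_inc i (msub \<alpha>' \<gamma>)) b))"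
    by (simp add: Suc(1)[OF d] pd_sum pd_mult pdm_mind_inc sum.distrib algebra_simps)
  also have "(\<Sum>\<gamma>\<in>le_set \<alpha>'. of_nat (mchoose \<alpha>' \<gamma>) * (pdm \<gamma> a * pdm (mind_inc i (msub \<alpha>' \<gamma>)) b))
     = (\<Sum>\<gamma>\<in>le_set (mind_inc i \<alpha>'). of_nat (mchoose \<alpha>' \<gamma>) * T \<gamma>)"
  proof (rule sum.mono_neutral_cong_left)
    show "le_set \<alpha>' \<subseteq> le_set (mind_inc i \<alpha>')" by (auto simp: le_set_def mind_inc_def le_SucI)
    show "\<forall>x\<in>le_set (mind_inc i \<alpha>') - le_set \<alpha>'. of_nat (mchoose \<alpha>' x) * T x = 0"
      by (auto simp: le_set_def mchoose_zero)
    show "of_nat (mchoose \<alpha>' x) * (pdm x a * pdm (mind_inc i (msub \<alpha>' x)) b) = of_nat (mchoose \<alpha>' x) * T x"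
      if "x \<in> le_set \<alpha>'" for x
      using that by (auto simp: T_def le_set_def msub_def mind_inc_def fun_eq_iff Suc_diff_le intro!: arg_cong2[where f=pdm])
  qed simp
  also have "(\<Sum>\<gamma>\<in>le_set \<alpha>'. of_nat (mchoose \<alpha>' \<gamma>) * (pdm (mind_inc i \<gamma>) a * pdm (msub \<alpha>' \<gamma>) b))
     = (\<Sum>\<gamma>\<in>le_set (mind_inc i \<alpha>'). of_nat (if \<gamma> i = 0 then 0 else mchoose \<alpha>' (mind_dec i \<gamma>)) * T \<gamma>)"
  proof -
    have "(\<Sum>\<gamma>\<in>le_set \<alpha>'. of_nat (mchoose \<alpha>' \<gamma>) * (pdm (mind_inc i \<gamma>) a * pdm (msub \<alpha>' \<gamma>) b))
        = (\<Sum>\<gamma>\<in>{\<gamma>\<in>le_set (mind_inc i \<alpha>'). \<gamma> i \<noteq> 0}. of_nat (mchoose \<alpha>' (mind_dec i \<gamma>)) * T \<gamma>)"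
      by (rule sum.reindex_bij_witness[where i="mind_dec i" and j="mind_inc i"])
         (auto simp: mind_dec_le_set mind_inc_le_set mind_inc_dec mind_dec_inc T_def msub_mind_inc)
    also have "\<dots> = (\<Sum>\<gamma>\<in>le_set (mind_inc i \<alpha>'). of_nat (if \<gamma> i = 0 then 0 else mchoose \<alpha>' (mind_dec i \<gamma>)) * T \<gamma>)"
      by (rule sum.mono_neutral_cong_left) auto
    finally show ?thesis .
  qed
  also have "(\<Sum>\<gamma>\<in>le_set (mind_inc i \<alpha>'). of_nat (if \<gamma> i = 0 then 0 else mchoose \<alpha>' (mind_dec i \<gamma>)) * T \<gamma>)
      + (\<Sum>\<gamma>\<in>le_set (mind_inc i \<alpha>'). of_nat (mchoose \<alpha>' \<gamma>) * T \<gamma>)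
      = (\<Sum>\<gamma>\<in>le_set \<alpha>. of_nat (mchoose \<alpha> \<gamma>) * pdm \<gamma> a * pdm (msub \<alpha> \<gamma>) b)"
    unfolding a T_def by (simp add: mchoose_mind_inc sum.distrib[symmetric] algebra_simps)
  finally show ?case .
qed

text \<open>An operator is determined by its action on power series (\<open>dop_eq_by_dop_act\<close>), so identities
  between operators are checked on their action.\<close>

definition dop_act :: "('n::finite) dop \<Rightarrow> 'n ps \<Rightarrow> 'n ps" where
  "dop_act P a = (\<Sum>\<alpha>\<in>dsupp P. Ps (P \<alpha>) * pdm \<alpha> a)"

lemma Ps_pdm: "Ps (ps_pdm \<alpha> f) = pdm \<alpha> (Ps f)"
  by (rule Ps_eqI) (simp add: pdm.rep_eq)

lemma dop_apply_eq_dop_act: "dop_apply P f = coef (dop_act P (Ps f))"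
  by (rule ext) (simp add: dop_apply_def dop_act_def coef_sum ps_mult_coef Ps_pdm)

lemma Ps_eq_0_iff: "Ps f = 0 \<longleftrightarrow> f = ps_zero"
  by (metis Ps_zero Ps_inject UNIV_I)

lemma dop_act_superset:
  assumes "finite A" "dsupp P \<subseteq> A"
  shows "dop_act P a = (\<Sum>\<alpha>\<in>A. Ps (P \<alpha>) * pdm \<alpha> a)"
  unfolding dop_act_def by (rule sum.mono_neutral_left) (use assms in \<open>auto simp: dsupp_def\<close>)

lemma dsupp_add: "dsupp (dop_add P Q) \<subseteq> dsupp P \<union> dsupp Q"
  by (auto simp: dsupp_def dop_add_def ps_zero_def fun_eq_iff)

lemma dop_act_add:
  assumes "finite (dsupp P)" "finite (dsupp Q)"
  shows "dop_act (dop_add P Q) a = dop_act P a + dop_act Q a"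
proof -
  have "Ps (\<lambda>\<beta>. P \<alpha> \<beta> + Q \<alpha> \<beta>) = Ps (P \<alpha>) + Ps (Q \<alpha>)" for \<alpha>
    by (rule Ps_eqI) simp
  then show ?thesis
    using assms dsupp_add[of P Q]
    by (simp add: dop_act_superset[where A="dsupp P \<union> dsupp Q"] dop_add_def sum.distrib distrib_right)
qed

lemma dsupp_mult_op: "dsupp (mult_op c) \<subseteq> {mi0}"
  by (auto simp: dsupp_def mult_op_def)

lemma dop_act_mult_op: "dop_act (mult_op c) a = Ps c * a"
  by (subst dop_act_superset[OF _ dsupp_mult_op]) (simp_all add: mult_op_def)

lemma finite_dsupp_mult_op: "finite (dsupp (mult_op c))"
  using dsupp_mult_op by (rule finite_subset) simp

definition dop_comp_support :: "('n::finite) dop \<Rightarrow> 'n dop \<Rightarrow> 'n mind set" where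
  "dop_comp_support P Q = (\<lambda>(\<alpha>,\<beta>,\<gamma>). madd (msub \<alpha> \<gamma>) \<beta>) ` {(\<alpha>,\<beta>,\<gamma>). \<alpha> \<in> dsupp P \<and> \<beta> \<in> dsupp Q \<and> \<gamma> \<in> le_set \<alpha>}"

lemma finite_dop_comp_support:
  assumes "finite (dsupp P)" "finite (dsupp (Q::('n::finite) dop))"
  shows "finite (dop_comp_support P Q)"
proof -
  have "{(\<alpha>,\<beta>,\<gamma>). \<alpha> \<in> dsupp P \<and> \<beta> \<in> dsupp Q \<and> \<gamma> \<in> le_set \<alpha>} \<subseteq> dsupp P \<times> dsupp Q \<times> (\<Union>\<alpha>\<in>dsupp P. le_set \<alpha>)"
    by auto
  then show ?thesis unfolding dop_comp_support_def using assms by (intro finite_imageI) (auto intro: finite_subset)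
qed

lemma dsupp_dop_comp: "dsupp (dop_comp P Q) \<subseteq> dop_comp_support P Q"
proof
  fix \<delta> assume "\<delta> \<in> dsupp (dop_comp P Q)"
  then obtain \<epsilon> where "dop_comp P Q \<delta> \<epsilon> \<noteq> 0" by (auto simp: dsupp_def ps_zero_def)
  then obtain \<alpha> \<beta> \<gamma> where "\<alpha> \<in> dsupp P" "\<beta> \<in> dsupp Q" "\<gamma> \<in> le_set \<alpha>" "\<forall>i. \<alpha> i - \<gamma> i + \<beta> i = \<delta> i"
    unfolding dop_comp_def le_set_def by (auto elim!: sum.not_neutral_contains_not_neutral split: if_splits)
  moreover have "\<delta> = madd (msub \<alpha> \<gamma>) \<beta>" using \<open>\<forall>i. \<alpha> i - \<gamma> i + \<beta> i = \<delta> i\<close>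
    by (auto simp: madd_def msub_def fun_eq_iff)
  ultimately show "\<delta> \<in> dop_comp_support P Q" unfolding dop_comp_support_def
    by (intro image_eqI[where x="(\<alpha>,\<beta>,\<gamma>)"]) auto
qed

lemma finite_dsupp_comp:
  "finite (dsupp P) \<Longrightarrow> finite (dsupp (Q::('n::finite) dop)) \<Longrightarrow> finite (dsupp (dop_comp P Q))"
  by (rule finite_subset[OF dsupp_dop_comp finite_dop_comp_support])

lemma coef_if0[simp]: "coef (if P then a else 0) \<beta> = (if P then coef a \<beta> else 0)"
  by (simp add: ps_zero_def)

lemma coef_scaled_term: "coef (of_nat n * Ps f * pdm \<gamma> (Ps g)) \<epsilon> = of_nat n * ps_mult f (ps_pdm \<gamma> g) \<epsilon>"
  by (simp only: mult.assoc coef_of_nat_mult) (simp only: coef_mult pdm.rep_eq coef_Ps)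

lemma Ps_dop_comp:
  "Ps (dop_comp P Q \<delta>) = (\<Sum>\<alpha>\<in>dsupp P. \<Sum>\<beta>\<in>dsupp Q. \<Sum>\<gamma>\<in>le_set \<alpha>.
      if madd (msub \<alpha> \<gamma>) \<beta> = \<delta> then of_nat (mchoose \<alpha> \<gamma>) * Ps (P \<alpha>) * pdm \<gamma> (Ps (Q \<beta>)) else 0)"
proof (rule Ps_eqI)
  fix \<epsilon>
  have c: "(madd (msub \<alpha> \<gamma>) \<beta> = \<delta>) = (\<forall>i. \<alpha> i - \<gamma> i + \<beta> i = \<delta> i)" for \<alpha> \<beta> \<gamma>
    by (auto simp: madd_def msub_def fun_eq_iff)
  show "dop_comp P Q \<delta> \<epsilon> = coef (\<Sum>\<alpha>\<in>dsupp P. \<Sum>\<beta>\<in>dsupp Q. \<Sum>\<gamma>\<in>le_set \<alpha>.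
      if madd (msub \<alpha> \<gamma>) \<beta> = \<delta> then of_nat (mchoose \<alpha> \<gamma>) * Ps (P \<alpha>) * pdm \<gamma> (Ps (Q \<beta>)) else 0) \<epsilon>"
    unfolding coef_sum coef_if0 coef_scaled_term c dop_comp_def le_set_def mchoose_def ..
qed

lemma sum_swap_distrib_right:
  "(\<Sum>\<delta>\<in>D. (\<Sum>\<alpha>\<in>A. \<Sum>\<beta>\<in>B. \<Sum>\<gamma>\<in>L \<alpha>. f \<alpha> \<beta> \<gamma> \<delta>) * (g \<delta> :: 'a::comm_ring_1))
    = (\<Sum>\<alpha>\<in>A. \<Sum>\<beta>\<in>B. \<Sum>\<gamma>\<in>L \<alpha>. \<Sum>\<delta>\<in>D. f \<alpha> \<beta> \<gamma> \<delta> * g \<delta>)"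
proof -
  have "(\<Sum>\<delta>\<in>D. (\<Sum>\<alpha>\<in>A. \<Sum>\<beta>\<in>B. \<Sum>\<gamma>\<in>L \<alpha>. f \<alpha> \<beta> \<gamma> \<delta>) * g \<delta>)
     = (\<Sum>\<delta>\<in>D. \<Sum>\<alpha>\<in>A. \<Sum>\<beta>\<in>B. \<Sum>\<gamma>\<in>L \<alpha>. f \<alpha> \<beta> \<gamma> \<delta> * g \<delta>)"
    by (simp only: sum_distrib_right)
  also have "\<dots> = (\<Sum>\<alpha>\<in>A. \<Sum>\<delta>\<in>D. \<Sum>\<beta>\<in>B. \<Sum>\<gamma>\<in>L \<alpha>. f \<alpha> \<beta> \<gamma> \<delta> * g \<delta>)"
    by (rule sum.swap)
  also have "\<dots> = (\<Sum>\<alpha>\<in>A. \<Sum>\<beta>\<in>B. \<Sum>\<delta>\<in>D. \<Sum>\<gamma>\<in>L \<alpha>. f \<alpha> \<beta> \<gamma> \<delta> * g \<delta>)"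
    by (rule sum.cong[OF refl], rule sum.swap)
  also have "\<dots> = (\<Sum>\<alpha>\<in>A. \<Sum>\<beta>\<in>B. \<Sum>\<gamma>\<in>L \<alpha>. \<Sum>\<delta>\<in>D. f \<alpha> \<beta> \<gamma> \<delta> * g \<delta>)"
    by (rule sum.cong[OF refl], rule sum.cong[OF refl], rule sum.swap)
  finally show ?thesis .
qed

lemma dop_act_comp:
  assumes "finite (dsupp P)" "finite (dsupp (Q::('n::finite) dop))"
  shows "dop_act (dop_comp P Q) a = dop_act P (dop_act Q a)"
proof -
  define D where "D = dop_comp_support P Q"
  have fD: "finite D" using finite_dop_comp_support[OF assms] by (simp add: D_def)
  have "dop_act (dop_comp P Q) a = (\<Sum>\<delta>\<in>D. Ps (dop_comp P Q \<delta>) * pdm \<delta> a)"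
    by (rule dop_act_superset[OF fD]) (simp add: D_def dsupp_dop_comp)
  also have "\<dots> = (\<Sum>\<alpha>\<in>dsupp P. \<Sum>\<beta>\<in>dsupp Q. \<Sum>\<gamma>\<in>le_set \<alpha>. \<Sum>\<delta>\<in>D.
      (if madd (msub \<alpha> \<gamma>) \<beta> = \<delta> then of_nat (mchoose \<alpha> \<gamma>) * Ps (P \<alpha>) * pdm \<gamma> (Ps (Q \<beta>)) else 0) * pdm \<delta> a)"
    unfolding Ps_dop_comp by (rule sum_swap_distrib_right)
  also have "\<dots> = (\<Sum>\<alpha>\<in>dsupp P. \<Sum>\<beta>\<in>dsupp Q. \<Sum>\<gamma>\<in>le_set \<alpha>.
      of_nat (mchoose \<alpha> \<gamma>) * Ps (P \<alpha>) * pdm \<gamma> (Ps (Q \<beta>)) * pdm (madd (msub \<alpha> \<gamma>) \<beta>) a)"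
  proof (intro sum.cong[OF refl])
    fix \<alpha> \<beta> \<gamma> assume "\<alpha> \<in> dsupp P" "\<beta> \<in> dsupp Q" "\<gamma> \<in> le_set \<alpha>"
    then have "madd (msub \<alpha> \<gamma>) \<beta> \<in> D" unfolding D_def dop_comp_support_def
      by (intro image_eqI[where x="(\<alpha>,\<beta>,\<gamma>)"]) auto
    then show "(\<Sum>\<delta>\<in>D. (if madd (msub \<alpha> \<gamma>) \<beta> = \<delta> then of_nat (mchoose \<alpha> \<gamma>) * Ps (P \<alpha>) * pdm \<gamma> (Ps (Q \<beta>)) else 0) * pdm \<delta> a)
        = of_nat (mchoose \<alpha> \<gamma>) * Ps (P \<alpha>) * pdm \<gamma> (Ps (Q \<beta>)) * pdm (madd (msub \<alpha> \<gamma>) \<beta>) a"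
      using fD by (simp add: if_distrib[of "\<lambda>x. x * _"] sum.delta cong: if_cong)
  qed
  also have "\<dots> = dop_act P (dop_act Q a)"
  proof -
    have "dop_act P (dop_act Q a) = (\<Sum>\<alpha>\<in>dsupp P. \<Sum>\<beta>\<in>dsupp Q. Ps (P \<alpha>) * pdm \<alpha> (Ps (Q \<beta>) * pdm \<beta> a))"
      unfolding dop_act_def by (simp only: pdm_sum sum_distrib_left)
    also have "\<dots> = (\<Sum>\<alpha>\<in>dsupp P. \<Sum>\<beta>\<in>dsupp Q. \<Sum>\<gamma>\<in>le_set \<alpha>. Ps (P \<alpha>) *
        (of_nat (mchoose \<alpha> \<gamma>) * pdm \<gamma> (Ps (Q \<beta>)) * pdm (msub \<alpha> \<gamma>) (pdm \<beta> a)))"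
      by (simp only: pdm_mult_leibniz sum_distrib_left)
    also have "\<dots> = (\<Sum>\<alpha>\<in>dsupp P. \<Sum>\<beta>\<in>dsupp Q. \<Sum>\<gamma>\<in>le_set \<alpha>.
      of_nat (mchoose \<alpha> \<gamma>) * Ps (P \<alpha>) * pdm \<gamma> (Ps (Q \<beta>)) * pdm (madd (msub \<alpha> \<gamma>) \<beta>) a)"
      by (intro sum.cong refl) (simp add: pdm_pdm madd_def msub_def mult_ac)
    finally show ?thesis by simp
  qed
  finally show ?thesis .
qed

definition monomial_ps :: "('n::finite) mind \<Rightarrow> 'n ps" where
  "monomial_ps \<beta> = Ps (\<lambda>\<gamma>. if \<gamma> = \<beta> then 1 else 0)"

lemma pdm_monomial_not_le: "\<alpha> \<notin> le_set \<beta> \<Longrightarrow> pdm \<alpha> (monomial_ps \<beta>) = 0"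
  by (rule coef_inject[THEN iffD1], rule ext)
     (auto simp: coef_pdm monomial_ps_def ps_zero_def le_set_def dest: arg_cong[where f="\<lambda>f. f _"])

lemma pdm_monomial_self: "pdm \<beta> (monomial_ps \<beta>) = cst (\<Prod>i\<in>UNIV. pochhammer 1 (\<beta> i))"
proof (rule coef_inject[THEN iffD1], rule ext)
  fix \<gamma>
  have "((\<lambda>i. \<gamma> i + \<beta> i) = \<beta>) = (\<gamma> = mi0)" by (auto simp: fun_eq_iff mi0_def)
  then show "coef (pdm \<beta> (monomial_ps \<beta>)) \<gamma> = coef (cst (\<Prod>i\<in>UNIV. pochhammer 1 (\<beta> i))) \<gamma>"
    by (auto simp: coef_pdm monomial_ps_def cst.rep_eq mi0_def)
qed

lemma cst_nonzero: "c \<noteq> 0 \<Longrightarrow> cst c \<noteq> (0::('n::finite) ps)"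
  by (metis cst.rep_eq coef_zero ps_zero_def)

lemma mdeg_less: "\<alpha> \<in> le_set \<beta> \<Longrightarrow> \<alpha> \<noteq> \<beta> \<Longrightarrow> mdeg \<alpha> < mdeg (\<beta>::('n::finite) mind)"
  unfolding mdeg_def le_set_def
  by (rule sum_strict_mono_ex1) (auto simp: fun_eq_iff intro: le_neq_trans)

lemma pdm_combination_eq_0:
  fixes D :: "('n::finite) mind \<Rightarrow> 'n ps"
  assumes "finite A" "\<And>\<alpha>. \<alpha> \<notin> A \<Longrightarrow> D \<alpha> = 0" "\<And>a. (\<Sum>\<alpha>\<in>A. D \<alpha> * pdm \<alpha> a) = 0"
  shows "D \<beta> = 0"
proof (induction "mdeg \<beta>" arbitrary: \<beta> rule: less_induct)
  case less
  show ?case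
  proof (cases "\<beta> \<in> A")
    case False then show ?thesis using assms(2) by simp
  next
    case True
    have "0 = (\<Sum>\<alpha>\<in>A. D \<alpha> * pdm \<alpha> (monomial_ps \<beta>))" using assms(3) by simp
    also have "\<dots> = (\<Sum>\<alpha>\<in>A. if \<alpha> = \<beta> then D \<beta> * pdm \<beta> (monomial_ps \<beta>) else 0)"
    proof (rule sum.cong[OF refl])
      fix \<alpha> assume "\<alpha> \<in> A"
      show "D \<alpha> * pdm \<alpha> (monomial_ps \<beta>) = (if \<alpha> = \<beta> then D \<beta> * pdm \<beta> (monomial_ps \<beta>) else 0)"
      proof (cases "\<alpha> = \<beta>")
        case False
        show ?thesis
        proof (cases "\<alpha> \<in> le_set \<beta>")
          case True
          then have "D \<alpha> = 0" using less mdeg_less[OF True False] by blast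
          then show ?thesis using False by simp
        qed (use False pdm_monomial_not_le in auto)
      qed simp
    qed
    also have "\<dots> = D \<beta> * cst (\<Prod>i\<in>UNIV. pochhammer 1 (\<beta> i))"
      using True assms(1) by (simp add: pdm_monomial_self)
    finally have "D \<beta> * cst (\<Prod>i\<in>UNIV. pochhammer 1 (\<beta> i)) = 0" by simp
    moreover have "cst (\<Prod>i\<in>UNIV. pochhammer (1::complex) (\<beta> i)) \<noteq> (0::'n ps)"
      by (rule cst_nonzero) (simp add: pochhammer_fact[symmetric])
    ultimately show ?thesis by simp
  qed
qed

lemma dop_eq_by_dop_act:
  assumes "finite (dsupp P)" "finite (dsupp (Q::('n::finite) dop))" "\<And>a. dop_act P a = dop_act Q a"
  shows "P = Q"
proof -
  define A where "A = dsupp P \<union> dsupp Q"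
  have fA: "finite A" using assms by (simp add: A_def)
  have "Ps (P \<alpha>) - Ps (Q \<alpha>) = 0" for \<alpha>
  proof (rule pdm_combination_eq_0[OF fA])
    show "Ps (P \<alpha>) - Ps (Q \<alpha>) = 0" if "\<alpha> \<notin> A" for \<alpha>
      using that by (simp add: A_def dsupp_def)
    show "(\<Sum>\<alpha>\<in>A. (Ps (P \<alpha>) - Ps (Q \<alpha>)) * pdm \<alpha> a) = 0" for a
      using assms(3)[of a] dop_act_superset[OF fA, of P a] dop_act_superset[OF fA, of Q a]
      by (simp add: A_def algebra_simps sum_subtractf)
  qed
  then show ?thesis by (auto simp: fun_eq_iff Ps_inject)
qed

lemma is_dop_iff: "is_dop P \<longleftrightarrow> finite (dsupp P) \<and> (\<forall>\<alpha>. conv_ps (Ps (P \<alpha>)))"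
  by (simp add: is_dop_def conv_ps_def)

lemma is_dop_add: "is_dop P \<Longrightarrow> is_dop Q \<Longrightarrow> is_dop (dop_add P Q)"
proof -
  assume a: "is_dop P" "is_dop Q"
  have "Ps (dop_add P Q \<alpha>) = Ps (P \<alpha>) + Ps (Q \<alpha>)" for \<alpha> by (rule Ps_eqI) (simp add: dop_add_def)
  then show ?thesis using a dsupp_add[of P Q] by (auto simp: is_dop_iff intro: finite_subset)
qed

lemma convergent_ps_zero: "convergent_ps (ps_zero :: ('n::finite) cps)"
  using conv_ps_zero by (simp add: conv_ps_def)

lemma is_dop_mult_op: "convergent_ps c \<Longrightarrow> is_dop (mult_op c)"
  unfolding is_dop_def using finite_dsupp_mult_op[of c] by (simp add: mult_op_def convergent_ps_zero)

lemma is_dop_zero: "is_dop (dop_zero :: ('n::finite) dop)"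
proof -
  have "dsupp (dop_zero :: 'n dop) = {}" by (auto simp: dsupp_def dop_zero_def ps_zero_def)
  then show ?thesis using conv_ps_zero by (simp add: is_dop_iff dop_zero_def flip: ps_zero_def)
qed

lemma is_dop_comp: "is_dop P \<Longrightarrow> is_dop Q \<Longrightarrow> is_dop (dop_comp P Q)"
  by (auto simp: is_dop_iff finite_dsupp_comp Ps_dop_comp intro!: conv_ps_sum conv_ps_mult conv_ps_pdm conv_ps_of_nat conv_ps_zero)

lemma dop_act_zero: "dop_act dop_zero a = 0"
  by (simp add: dop_act_def dsupp_def dop_zero_def ps_zero_def)

lemma dop_add_zero: "dop_add P dop_zero = P"
  by (simp add: dop_add_def dop_zero_def)

lemma mult_op_zero: "mult_op ps_zero = dop_zero"
  by (auto simp: mult_op_def dop_zero_def ps_zero_def fun_eq_iff)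

lemma dop_lideal_subset: "S \<subseteq> dop_lideal T \<Longrightarrow> dop_lideal S \<subseteq> dop_lideal T"
proof
  fix P assume "S \<subseteq> dop_lideal T" "P \<in> dop_lideal S"
  then show "P \<in> dop_lideal T"
    by (induction rule: dop_lideal.induct[OF \<open>P \<in> dop_lideal S\<close>])
       (auto intro: dop_lideal.intros)
qed

lemma mdeg_eq_0: "mdeg \<alpha> = 0 \<Longrightarrow> \<alpha> = (mi0::('n::finite) mind)"
  by (auto simp: mdeg_def mi0_def fun_eq_iff)

lemma mdeg_eq_1: "mdeg \<alpha> = 1 \<Longrightarrow> \<exists>i. \<alpha> = ei (i::'n::finite)"
proof -
  assume "mdeg \<alpha> = 1"
  then obtain i where i: "\<alpha> i = 1" "\<forall>j. i \<noteq> j \<longrightarrow> \<alpha> j = 0"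
    unfolding mdeg_def using sum_eq_1_iff[of UNIV \<alpha>] by auto
  then have "\<alpha> = ei i" by (auto simp: ei_def fun_eq_iff)
  then show ?thesis by blast
qed

lemma mdeg_ei[simp]: "mdeg (ei (i::'n::finite)) = 1"
  by (simp add: mdeg_def ei_def)
lemma mdeg_mi0[simp]: "mdeg (mi0::('n::finite) mind) = 0"
  by (simp add: mdeg_def mi0_def)
lemma ei_inj: "inj ei"
  by (auto simp: inj_on_def ei_def fun_eq_iff split: if_splits)
lemma ei_ne_mi0[simp]: "ei i \<noteq> (mi0 :: ('n::finite) mind)"
  using mdeg_ei[of i] mdeg_mi0 by (metis one_neq_zero)
lemma mi0_ne_ei[simp]: "(mi0 :: ('n::finite) mind) \<noteq> ei i"
  using ei_ne_mi0[of i] by metis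

definition order1_minds :: "('n::finite) mind set" where "order1_minds = insert mi0 (range ei)"

lemma finite_order1_minds[simp]: "finite (order1_minds :: ('n::finite) mind set)"
  by (simp add: order1_minds_def)

lemma dsupp_order1: "dop_ord_le P 1 \<Longrightarrow> dsupp P \<subseteq> order1_minds"
proof
  fix \<alpha> assume "dop_ord_le P 1" "\<alpha> \<in> dsupp P"
  then have "mdeg \<alpha> \<le> 1" by (auto simp: dop_ord_le_def)
  then have "mdeg \<alpha> = 0 \<or> mdeg \<alpha> = 1" by auto
  then show "\<alpha> \<in> order1_minds" using mdeg_eq_0 mdeg_eq_1 by (auto simp: order1_minds_def)
qed

lemma sum_order1_minds:
  "(\<Sum>\<alpha>\<in>order1_minds. F \<alpha>) = F mi0 + (\<Sum>i\<in>UNIV. F (ei (i::'n::finite)))"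
proof -
  have "mi0 \<notin> range (ei :: 'n \<Rightarrow> _)" by auto
  then show ?thesis
    by (simp add: order1_minds_def sum.reindex[OF ei_inj])
qed

lemma dop_act_order1:
  assumes "dop_ord_le P 1"
  shows "dop_act P a = Ps (P mi0) * a + (\<Sum>i\<in>UNIV. Ps (P (ei i)) * pd i a)"
  by (simp add: dop_act_superset[OF finite_order1_minds dsupp_order1[OF assms]] sum_order1_minds pd_pdm)

definition vector_field :: "('n \<Rightarrow> 'n cps) \<Rightarrow> ('n::finite) dop" where
  "vector_field b = (\<lambda>\<alpha>. if \<alpha> \<in> range ei then b (inv ei \<alpha>) else ps_zero)"

lemma vector_field_ei[simp]: "vector_field b (ei i) = b i"
  by (simp add: vector_field_def inv_f_f[OF ei_inj])
lemma vector_field_mi0[simp]: "vector_field b mi0 = ps_zero"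
  by (auto simp: vector_field_def)
lemma dsupp_vector_field: "dsupp (vector_field b) \<subseteq> range ei"
  by (auto simp: dsupp_def vector_field_def split: if_splits)
lemma dop_ord_le_vector_field: "dop_ord_le (vector_field b) 1"
  by (auto simp: dop_ord_le_def dest!: subsetD[OF dsupp_vector_field])
lemma is_dop_vector_field: "(\<And>i. convergent_ps (b i)) \<Longrightarrow> is_dop (vector_field b)"
  unfolding is_dop_def using finite_subset[OF dsupp_vector_field[of b]] convergent_ps_zero by (auto simp: vector_field_def)
lemma dop_act_vector_field: "dop_act (vector_field b) a = (\<Sum>i\<in>UNIV. Ps (b i) * pd i a)"
  by (simp add: dop_act_order1[OF dop_ord_le_vector_field])

lemma dop_ord_le_add: "dop_ord_le P k \<Longrightarrow> dop_ord_le Q k \<Longrightarrow> dop_ord_le (dop_add P Q) k"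
  using dsupp_add[of P Q] by (auto simp: dop_ord_le_def)
lemma dop_ord_le_mult_op: "dop_ord_le (mult_op c) k"
  using dsupp_mult_op[of c] by (auto simp: dop_ord_le_def)

lemma dop_act_add_arg: "dop_act P (a + b) = dop_act P a + dop_act P b"
  by (simp add: dop_act_def distrib_left sum.distrib)

definition vf_part :: "('n::finite) dop \<Rightarrow> 'n ps \<Rightarrow> 'n ps" where
  "vf_part Q b = (\<Sum>i\<in>UNIV. Ps (Q (ei i)) * pd i b)"

lemma dop_act_order1_mult:
  assumes "dop_ord_le Q 1"
  shows "dop_act Q (b * a) = b * dop_act Q a + vf_part Q b * a"
  by (simp add: dop_act_order1[OF assms] vf_part_def pd_mult sum_distrib_left sum_distrib_right sum.distrib algebra_simps)

lemma conv_ps_coeff: "is_dop P \<Longrightarrow> conv_ps (Ps (P \<alpha>))"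
  by (simp add: is_dop_iff)

lemma conv_ps_vf_part: "is_dop Q \<Longrightarrow> conv_ps b \<Longrightarrow> conv_ps (vf_part Q b)"
  unfolding vf_part_def by (intro conv_ps_sum conv_ps_mult conv_ps_pd conv_ps_coeff) auto

lemma convergent_ps_coef: "conv_ps b \<Longrightarrow> convergent_ps (coef b)"
  by (simp add: conv_ps_def)

lemma dop_zero_add: "dop_add dop_zero P = P"
  by (simp add: dop_add_def dop_zero_def)

lemma dop_act_mult_op_comp: "dop_act (dop_comp (mult_op c) Q) a = Ps c * dop_act Q a" if "finite (dsupp Q)"
  by (simp add: dop_act_comp[OF finite_dsupp_mult_op that] dop_act_mult_op)

lemma is_dop_finite_dsupp: "is_dop P \<Longrightarrow> finite (dsupp P)"
  by (simp add: is_dop_def)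

lemma convergent_ps_one: "convergent_ps (ps_one :: ('n::finite) cps)"
  using conv_ps_one by (simp add: conv_ps_def)
section \<open>The modules \<open>\<O>[1/h]\<close> and \<open>\<O>[1/h,s]h\<^sup>s\<close>\<close>

text \<open>Substituting \<open>s = m\<close> (\<open>hs_at m\<close>) in \<open>\<partial>\<^sup>\<alpha> h\<^sup>s\<close> gives \<open>\<partial>\<^sup>\<alpha> h\<^sup>m\<close> (\<open>pdm_power_hs_at\<close>), and substituting
  \<open>s = -1\<close> (\<open>hs_at_neg1\<close>) gives \<open>\<partial>\<^sup>\<alpha> (1/h)\<close> (\<open>inv_deriv_hs_at_neg1\<close>).\<close>

context
  fixes h :: "('n::finite) cps"
begin

lemma Ps_hs_pd:
  "Ps (fst (hs_pd h i (G, k)) j) = (Ps h) * pd i (Ps (G j)) - of_nat k * (Ps (G j) * pd i (Ps h))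
     + (case j of 0 \<Rightarrow> 0 | Suc j' \<Rightarrow> Ps (G j') * pd i (Ps h))"
  by (rule Ps_eqI) (auto simp: hs_pd_def ps_mult_coef ps_pd_coef coef_of_nat_mult ps_zero_def split: nat.split)

lemma snd_hs_pd[simp]: "snd (hs_pd h i x) = Suc (snd x)"
  by (cases x) (simp add: hs_pd_def)

lemma Ps_loc_pd:
  "Ps (fst (loc_pd h i (g, k))) = (Ps h) * pd i (Ps g) - of_nat k * (Ps g * pd i (Ps h))"
  by (rule Ps_eqI) (auto simp: loc_pd_def ps_mult_coef ps_pd_coef coef_of_nat_mult)

lemma snd_loc_pd[simp]: "snd (loc_pd h i x) = Suc (snd x)"
  by (cases x) (simp add: loc_pd_def)

definition hs_deriv :: "'n mind \<Rightarrow> (nat \<Rightarrow> 'n cps) \<times> nat" where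
  "hs_deriv \<alpha> = iter_pd (hs_pd h) \<alpha> hs_gen"

lemma snd_hs_deriv: "snd (hs_deriv \<alpha>) = mdeg \<alpha>"
  unfolding hs_deriv_def by (subst iter_pd_count[where c=snd]) (auto simp: hs_gen_def)

definition hs_bounded :: "(nat \<Rightarrow> 'n cps) \<times> nat \<Rightarrow> bool" where
  "hs_bounded x \<longleftrightarrow> (\<forall>j>snd x. fst x j = ps_zero)"

lemma hs_bounded_hs_pd: assumes a: "hs_bounded x" shows "hs_bounded (hs_pd h i x)"
proof (cases x)
  case (Pair G k)
  show ?thesis unfolding hs_bounded_def
  proof (intro allI impI)
    fix j assume "snd (hs_pd h i x) < j"
    then have "j > Suc k" using Pair by simp
    then have "Ps (fst (hs_pd h i (G,k)) j) = 0" using a Pair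
      by (subst Ps_hs_pd) (auto simp: hs_bounded_def split: nat.split)
    then show "fst (hs_pd h i x) j = ps_zero" using Pair by (metis Ps_zero Ps_inject UNIV_I)
  qed
qed

lemma hs_bounded_hs_deriv: "hs_bounded (hs_deriv \<alpha>)"
proof -
  have "(\<lambda>x (y::unit). hs_bounded x) (iter_pd (hs_pd h) \<alpha> hs_gen) (iter_pd (\<lambda>i. id) \<alpha> ())"
  proof (rule iter_pd_rel[where R="\<lambda>x (y::unit). hs_bounded x"])
    show "hs_bounded (hs_pd h i x)" if "hs_bounded x" for i x and y :: unit using that by (rule hs_bounded_hs_pd)
    show "hs_bounded hs_gen" by (simp add: hs_bounded_def hs_gen_def)
  qed
  then show ?thesis by (simp add: hs_deriv_def)
qed

definition hs_at :: "nat \<Rightarrow> (nat \<Rightarrow> 'n cps) \<times> nat \<Rightarrow> 'n ps" where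
  "hs_at m x = (\<Sum>j\<le>snd x. of_nat (m ^ j) * Ps (fst x j))"

definition hs_at_neg1 :: "(nat \<Rightarrow> 'n cps) \<times> nat \<Rightarrow> 'n ps" where
  "hs_at_neg1 x = (\<Sum>j\<le>snd x. (-1) ^ j * Ps (fst x j))"

lemma sum_shift_case:
  "(\<Sum>j\<le>Suc k. (c j :: 'n ps) * (case j of 0 \<Rightarrow> 0 | Suc j' \<Rightarrow> F j')) = (\<Sum>j\<le>k. c (Suc j) * F j)"
  by (subst sum.atMost_Suc_shift) simp

lemma hs_at_hs_pd:
  assumes "hs_bounded (G, k)"
  shows "hs_at m (hs_pd h i (G, k)) = (Ps h) * pd i (hs_at m (G, k)) + (of_nat m - of_nat k) * hs_at m (G, k) * pd i (Ps h)"
proof -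
  define S where "S = hs_at m (G, k)"
  have z: "Ps (G (Suc k)) = 0" using assms by (simp add: hs_bounded_def)
  have "hs_at m (hs_pd h i (G, k)) = (\<Sum>j\<le>Suc k. of_nat (m ^ j) * ((Ps h) * pd i (Ps (G j)) - of_nat k * (Ps (G j) * pd i (Ps h))
     + (case j of 0 \<Rightarrow> 0 | Suc j' \<Rightarrow> Ps (G j') * pd i (Ps h))))"
    unfolding hs_at_def by (simp add: Ps_hs_pd)
  also have "\<dots> = (\<Sum>j\<le>Suc k. of_nat (m ^ j) * ((Ps h) * pd i (Ps (G j)) - of_nat k * (Ps (G j) * pd i (Ps h))))
     + (\<Sum>j\<le>Suc k. of_nat (m ^ j) * (case j of 0 \<Rightarrow> 0 | Suc j' \<Rightarrow> Ps (G j') * pd i (Ps h)))"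
    by (simp add: distrib_left sum.distrib)
  also have "(\<Sum>j\<le>Suc k. of_nat (m ^ j) * ((Ps h) * pd i (Ps (G j)) - of_nat k * (Ps (G j) * pd i (Ps h))))
      = (\<Sum>j\<le>k. of_nat (m ^ j) * ((Ps h) * pd i (Ps (G j)) - of_nat k * (Ps (G j) * pd i (Ps h))))"
    using z by simp
  also have "\<dots> = (Ps h) * pd i S - of_nat k * S * pd i (Ps h)"
    by (simp add: S_def hs_at_def pd_sum pd_mult sum_distrib_left sum_distrib_right sum_subtractf algebra_simps)
  also have "(\<Sum>j\<le>Suc k. of_nat (m ^ j) * (case j of 0 \<Rightarrow> 0 | Suc j' \<Rightarrow> Ps (G j') * pd i (Ps h))) = of_nat m * S * pd i (Ps h)"
    by (subst sum_shift_case) (simp add: S_def hs_at_def sum_distrib_left sum_distrib_right algebra_simps)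
  finally show ?thesis by (simp add: S_def algebra_simps)
qed

lemma pdm_power_hs_at:
  assumes "mdeg \<alpha> \<le> m"
  shows "pdm \<alpha> ((Ps h) ^ m) = hs_at m (hs_deriv \<alpha>) * (Ps h) ^ (m - mdeg \<alpha>)"
proof -
  define R where "R = (\<lambda>x a. hs_bounded x \<and> (snd x \<le> m \<longrightarrow> hs_at m x * (Ps h) ^ (m - snd x) = a))"
  have step: "R (hs_pd h i x) (pd i a)" if "R x a" for i x a
  proof (cases x)
    case (Pair G k)
    have inv: "hs_bounded (G, k)" using that Pair by (simp add: R_def)
    have "hs_at m (hs_pd h i (G, k)) * (Ps h) ^ (m - Suc k) = pd i (hs_at m (G, k) * (Ps h) ^ (m - k))" if "Suc k \<le> m"
    proof -
      obtain r where r: "m - k = Suc r" "m - Suc k = r" using \<open>Suc k \<le> m\<close> by (metis Suc_diff_Suc Suc_le_lessD diff_Suc_1)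
      have mk: "(of_nat m - of_nat k :: 'n ps) = of_nat (Suc r)" using r \<open>Suc k \<le> m\<close> by (simp add: of_nat_diff[symmetric])
      show ?thesis
        unfolding hs_at_hs_pd[OF inv] r pd_mult pd_power mk by (simp add: algebra_simps)
    qed
    then show ?thesis using that Pair by (auto simp: R_def hs_bounded_hs_pd)
  qed
  have "R (iter_pd (hs_pd h) \<alpha> hs_gen) (iter_pd pd \<alpha> ((Ps h) ^ m))"
    by (rule iter_pd_rel[where R=R, OF step]) (auto simp: R_def hs_gen_def hs_bounded_def hs_at_def)
  then show ?thesis using assms by (simp add: R_def iter_pd_pdm hs_deriv_def[symmetric] snd_hs_deriv)
qed

definition inv_deriv :: "'n mind \<Rightarrow> 'n cps \<times> nat" where
  "inv_deriv \<alpha> = iter_pd (loc_pd h) \<alpha> (ps_one, 1)"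

lemma inv_deriv_hs_at_neg1: "Ps (fst (inv_deriv \<alpha>)) = hs_at_neg1 (hs_deriv \<alpha>)"
proof -
  define R where "R = (\<lambda>(y::'n cps \<times> nat) x. snd y = Suc (snd x) \<and> hs_bounded x \<and> Ps (fst y) = hs_at_neg1 x)"
  have step: "R (loc_pd h i y) (hs_pd h i x)" if "R y x" for i x y
  proof (cases x; cases y)
    fix G k g k1 assume xy: "x = (G, k)" "y = (g, k1)"
    have inv: "hs_bounded (G, k)" and k1: "k1 = Suc k" and g: "Ps g = hs_at_neg1 (G, k)" using that xy by (auto simp: R_def)
    have z: "Ps (G (Suc k)) = 0" using inv by (simp add: hs_bounded_def)
    have "hs_at_neg1 (hs_pd h i (G, k)) = (\<Sum>j\<le>Suc k. (-1) ^ j * ((Ps h) * pd i (Ps (G j)) - of_nat k * (Ps (G j) * pd i (Ps h))))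
     + (\<Sum>j\<le>Suc k. (-1) ^ j * (case j of 0 \<Rightarrow> 0 | Suc j' \<Rightarrow> Ps (G j') * pd i (Ps h)))"
      unfolding hs_at_neg1_def by (simp add: Ps_hs_pd distrib_left sum.distrib)
    also have "(\<Sum>j\<le>Suc k. (-1) ^ j * ((Ps h) * pd i (Ps (G j)) - of_nat k * (Ps (G j) * pd i (Ps h))))
      = (\<Sum>j\<le>k. (-1) ^ j * ((Ps h) * pd i (Ps (G j)) - of_nat k * (Ps (G j) * pd i (Ps h))))"
      using z by simp
    also have "\<dots> = (Ps h) * pd i (hs_at_neg1 (G, k)) - of_nat k * hs_at_neg1 (G, k) * pd i (Ps h)"
      by (simp add: hs_at_neg1_def pd_sum pd_mult sum_distrib_left sum_distrib_right sum_subtractf algebra_simps)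
    also have "(\<Sum>j\<le>Suc k. (-1) ^ j * (case j of 0 \<Rightarrow> 0 | Suc j' \<Rightarrow> Ps (G j') * pd i (Ps h))) = - hs_at_neg1 (G, k) * pd i (Ps h)"
      by (subst sum_shift_case) (simp add: hs_at_neg1_def sum_distrib_left sum_distrib_right algebra_simps flip: sum_negf)
    finally have "hs_at_neg1 (hs_pd h i (G, k)) = (Ps h) * pd i (hs_at_neg1 (G, k)) - of_nat (Suc k) * hs_at_neg1 (G, k) * pd i (Ps h)"
      by (simp add: algebra_simps)
    then show ?thesis using xy inv k1 g by (simp add: R_def hs_bounded_hs_pd Ps_loc_pd algebra_simps)
  qed
  have "R (iter_pd (loc_pd h) \<alpha> (ps_one, 1)) (iter_pd (hs_pd h) \<alpha> hs_gen)"
    by (rule iter_pd_rel[where R=R, OF step]) (auto simp: R_def hs_gen_def hs_bounded_def hs_at_neg1_def)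
  then show ?thesis by (simp add: R_def inv_deriv_def hs_deriv_def)
qed

end

section \<open>Annihilators of \<open>1/h\<close> and of \<open>h\<^sup>s\<close>\<close>

definition lagrange_basis :: "(nat \<Rightarrow> complex) \<Rightarrow> nat \<Rightarrow> nat \<Rightarrow> complex poly" where
  "lagrange_basis x d k = smult (1 / (\<Prod>l\<in>{..d}-{k}. (x k - x l))) (\<Prod>l\<in>{..d}-{k}. [:- x l, 1:])"

lemma degree_lagrange_basis: "k \<le> d \<Longrightarrow> degree (lagrange_basis x d k) \<le> d"
proof -
  assume "k \<le> d"
  have "degree (\<Prod>l\<in>{..d}-{k}. [:- x l, 1:]) \<le> (\<Sum>l\<in>{..d}-{k}. degree [:- x l, 1:])"
    using degree_prod_sum_le[of "{..d}-{k}" "\<lambda>l. [:- x l, 1:]"] by (simp add: o_def)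
  also have "\<dots> \<le> d" using \<open>k \<le> d\<close> by (simp add: card_Diff_singleton)
  finally show ?thesis by (simp add: lagrange_basis_def)
qed

lemma poly_lagrange_basis:
  assumes inj: "inj_on x {..d}" and "k \<le> d" "l \<le> d"
  shows "poly (lagrange_basis x d k) (x l) = (if l = k then 1 else 0)"
proof (cases "l = k")
  case True
  have "(\<Prod>l\<in>{..d}-{k}. (x k - x l)) \<noteq> 0"
    using assms by (auto simp: inj_on_def)
  then show ?thesis using True by (simp add: lagrange_basis_def poly_prod)
next
  case False
  then have "l \<in> {..d}-{k}" using assms by auto
  then have "(\<Prod>m\<in>{..d}-{k}. poly [:- x m, 1:] (x l)) = 0"
    by (intro prod_zero) auto
  then show ?thesis using False by (simp add: lagrange_basis_def poly_prod)
qed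

lemma lagrange_interpolation_coeffs:
  fixes x :: "nat \<Rightarrow> complex"
  assumes inj: "inj_on x {..d}"
  obtains lam where "\<And>cs j. j \<le> d \<Longrightarrow> cs j = (\<Sum>k\<le>d. lam j k * (\<Sum>i\<le>d. cs i * x k ^ i))"
proof -
  define L where "L = lagrange_basis x d"
  have degL: "degree (L k) \<le> d" if "k \<le> d" for k
    using that by (simp add: L_def degree_lagrange_basis)
  have Lval: "poly (L k) (x l) = (if l = k then 1 else 0)" if "k \<le> d" "l \<le> d" for k l
    using that by (simp add: L_def poly_lagrange_basis[OF inj])
  show ?thesis
  proof (rule that[of "\<lambda>j k. poly.coeff (L k) j"])
    fix cs :: "nat \<Rightarrow> complex" and j assume j: "j \<le> d"
    define p where "p = (\<Sum>i\<le>d. monom (cs i) i)"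
    define q where "q = (\<Sum>k\<le>d. smult (poly p (x k)) (L k))"
    have pv: "poly p z = (\<Sum>i\<le>d. cs i * z ^ i)" for z by (simp add: p_def poly_sum poly_monom)
    have "p = q"
    proof (rule poly_eqI_degree[of "x ` {..d}"])
      fix z assume "z \<in> x ` {..d}"
      then obtain l where l: "l \<le> d" "z = x l" by auto
      have "poly q z = (\<Sum>k\<le>d. poly p (x k) * (if l = k then 1 else 0))"
        using l Lval by (simp add: q_def poly_sum)
      also have "\<dots> = poly p z" using l by (simp add: if_distrib sum.delta cong: if_cong)
      finally show "poly p z = poly q z" by simp
    next
      have c: "card (x ` {..d}) = Suc d" using inj by (simp add: card_image)
      show "degree p < card (x ` {..d})" unfolding c p_def
        by (rule le_imp_less_Suc, rule degree_sum_le) (auto intro: order_trans[OF degree_monom_le])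
      show "degree q < card (x ` {..d})" unfolding c q_def
        by (rule le_imp_less_Suc, rule degree_sum_le) (auto intro: order_trans[OF degree_smult_le] degL)
    qed
    then have "poly.coeff p j = poly.coeff q j" by simp
    moreover have "poly.coeff p j = cs j" using j by (simp add: p_def coeff_sum)
    moreover have "poly.coeff q j = (\<Sum>k\<le>d. poly.coeff (L k) j * (\<Sum>i\<le>d. cs i * x k ^ i))"
      by (simp add: q_def coeff_sum pv mult.commute)
    ultimately show "cs j = (\<Sum>k\<le>d. poly.coeff (L k) j * (\<Sum>i\<le>d. cs i * x k ^ i))" by simp
  qed
qed

text \<open>The coefficients are recovered from the values at \<open>m = N, \<dots>, N + d\<close> by Lagrange
  interpolation, which only takes constant linear combinations.\<close>

lemma coeffs_multiple_if_values_multiple: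
  fixes c :: "nat \<Rightarrow> ('n::finite) ps"
  assumes vals: "\<And>m. N \<le> m \<Longrightarrow> \<exists>g. conv_ps g \<and> (\<Sum>i\<le>d. of_nat (m ^ i) * c i) = a * g"
    and j: "j \<le> d"
  shows "\<exists>g. conv_ps g \<and> c j = a * g"
proof -
  have "inj_on (\<lambda>k. of_nat (N + k) :: complex) {..d}" by (auto simp: inj_on_def)
  then obtain lam where lam: "\<And>(cs :: nat \<Rightarrow> complex) j. j \<le> d \<Longrightarrow>
      cs j = (\<Sum>k\<le>d. lam j k * (\<Sum>i\<le>d. cs i * of_nat (N + k) ^ i))"
    by (rule lagrange_interpolation_coeffs) blast
  have "\<forall>k. \<exists>g. conv_ps g \<and> (\<Sum>i\<le>d. of_nat ((N + k) ^ i) * c i) = a * g"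
    using vals[of "N + _"] by (simp del: of_nat_add of_nat_power)
  then obtain g where g: "\<forall>k. conv_ps (g k) \<and> (\<Sum>i\<le>d. of_nat ((N + k) ^ i) * c i) = a * g k"
    by (rule choice[THEN exE])
  have "c j = (\<Sum>k\<le>d. cst (lam j k) * (\<Sum>i\<le>d. of_nat ((N + k) ^ i) * c i))"
  proof (rule coef_inject[THEN iffD1], rule ext)
    fix \<beta>
    show "coef (c j) \<beta> = coef (\<Sum>k\<le>d. cst (lam j k) * (\<Sum>i\<le>d. of_nat ((N + k) ^ i) * c i)) \<beta>"
      using lam[OF j, of "\<lambda>i. coef (c i) \<beta>"]
      by (simp add: coef_sum coef_cst_mult coef_of_nat_mult sum_distrib_left del: of_nat_add of_nat_power)
         (simp add: mult_ac)
  qed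
  also have "\<dots> = a * (\<Sum>k\<le>d. cst (lam j k) * g k)"
    using g by (simp add: sum_distrib_left mult_ac)
  finally show ?thesis using g by (intro exI[of _ "\<Sum>k\<le>d. cst (lam j k) * g k"]) auto
qed

lemma sum_swap_mult:
  "(\<Sum>\<alpha>\<in>A. a \<alpha> * (\<Sum>j\<in>B. c j * g \<alpha> j) * b \<alpha>) = (\<Sum>j\<in>B. c j * (\<Sum>\<alpha>\<in>A. a \<alpha> * g \<alpha> j * (b \<alpha> :: 'a::comm_ring_1)))"
proof -
  have "(\<Sum>\<alpha>\<in>A. a \<alpha> * (\<Sum>j\<in>B. c j * g \<alpha> j) * b \<alpha>) = (\<Sum>\<alpha>\<in>A. \<Sum>j\<in>B. c j * (a \<alpha> * g \<alpha> j * b \<alpha>))"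
    by (simp add: sum_distrib_left sum_distrib_right mult_ac)
  also have "\<dots> = (\<Sum>j\<in>B. \<Sum>\<alpha>\<in>A. c j * (a \<alpha> * g \<alpha> j * b \<alpha>))" by (rule sum.swap)
  also have "\<dots> = (\<Sum>j\<in>B. c j * (\<Sum>\<alpha>\<in>A. a \<alpha> * g \<alpha> j * b \<alpha>))" by (simp add: sum_distrib_left)
  finally show ?thesis .
qed

definition deg_sum :: "('n::finite) dop \<Rightarrow> nat" where "deg_sum P = (\<Sum>\<alpha>\<in>dsupp P. mdeg \<alpha>)"

lemma mdeg_le_deg_sum: "finite (dsupp P) \<Longrightarrow> \<alpha> \<in> dsupp P \<Longrightarrow> mdeg \<alpha> \<le> deg_sum P"
  unfolding deg_sum_def by (rule member_le_sum) auto

lemma ann_inv_iff_inv_deriv: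
  assumes "finite (dsupp P)"
  shows "P \<in> ann_inv h \<longleftrightarrow> is_dop P \<and>
    (\<Sum>\<alpha>\<in>dsupp P. Ps (P \<alpha>) * Ps (fst (inv_deriv h \<alpha>)) * Ps h ^ (deg_sum P - mdeg \<alpha>)) = 0"
proof -
  define X where "X = (\<Sum>\<alpha>\<in>dsupp P. Ps (P \<alpha>) * Ps (fst (inv_deriv h \<alpha>)) * Ps h ^ (deg_sum P - mdeg \<alpha>))"
  have cX: "coef X = (\<lambda>\<beta>. \<Sum>\<alpha>\<in>dsupp P. ps_mult (ps_mult (P \<alpha>) (fst (iter_pd (loc_pd h) \<alpha> (ps_one, 1)))) (ps_pow h (deg_sum P - mdeg \<alpha>)) \<beta>)"
    by (rule ext) (simp add: X_def coef_sum coef_mult coef_pow inv_deriv_def)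
  have "(coef X = ps_zero) = (X = 0)" by (metis coef_inject coef_zero)
  moreover have "P \<in> ann_inv h \<longleftrightarrow> is_dop P \<and> coef X = ps_zero"
    unfolding ann_inv_def Let_def deg_sum_def[symmetric] cX by simp
  ultimately show ?thesis unfolding X_def by simp
qed

lemma inv_deriv_mi0: "Ps (fst (inv_deriv h mi0)) = 1"
  by (simp add: inv_deriv_def)

lemma inv_deriv_ei: "Ps (fst (inv_deriv h (ei i))) = - pd i (Ps h)"
  by (simp add: inv_deriv_def Ps_loc_pd)

context
  fixes h :: "('n::finite) cps"
begin

text \<open>\<open>hs_coeff P j\<close> is the coefficient of \<open>s\<^sup>j\<close> in \<open>h\<^sup>M\<^sup>-\<^sup>s \<cdot> P h\<^sup>s\<close>, where \<open>M = deg_sum P\<close> bounds the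
  orders of the terms of \<open>P\<close>.\<close>

definition hs_coeff :: "'n dop \<Rightarrow> nat \<Rightarrow> 'n ps" where
  "hs_coeff P j = (\<Sum>\<alpha>\<in>dsupp P. Ps (P \<alpha>) * Ps (fst (hs_deriv h \<alpha>) j) * Ps h ^ (deg_sum P - mdeg \<alpha>))"

lemma hs_deriv_coeff_beyond_deg: "mdeg \<alpha> < j \<Longrightarrow> Ps (fst (hs_deriv h \<alpha>) j) = 0"
  using hs_bounded_hs_deriv[of h \<alpha>] snd_hs_deriv[of h \<alpha>] by (simp add: hs_bounded_def)

lemma coef_hs_coeff: "coef (hs_coeff P j) = (\<lambda>\<beta>. \<Sum>\<alpha>\<in>dsupp P. ps_mult (ps_mult (P \<alpha>) (fst (iter_pd (hs_pd h) \<alpha> hs_gen) j)) (ps_pow h (deg_sum P - mdeg \<alpha>)) \<beta>)"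
  by (rule ext) (simp add: hs_coeff_def coef_sum coef_mult coef_pow hs_deriv_def)

lemma ann_hs_iff_hs_coeff: "P \<in> ann_hs h \<longleftrightarrow> is_dop P \<and> (\<forall>j. hs_coeff P j = 0)"
proof -
  have "(coef (hs_coeff P j) = ps_zero) = (hs_coeff P j = 0)" for j
    by (metis coef_inject coef_zero)
  then show ?thesis unfolding ann_hs_def Let_def deg_sum_def[symmetric] coef_hs_coeff[symmetric] by auto
qed

lemma hs_at_neg1_extend: "mdeg \<alpha> \<le> N \<Longrightarrow> hs_at_neg1 (hs_deriv h \<alpha>) = (\<Sum>j\<le>N. (-1) ^ j * Ps (fst (hs_deriv h \<alpha>) j))"
  unfolding hs_at_neg1_def snd_hs_deriv by (rule sum.mono_neutral_left) (auto simp: hs_deriv_coeff_beyond_deg)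

lemma hs_at_extend: "mdeg \<alpha> \<le> N \<Longrightarrow> hs_at m (hs_deriv h \<alpha>) = (\<Sum>j\<le>N. of_nat (m ^ j) * Ps (fst (hs_deriv h \<alpha>) j))"
  unfolding hs_at_def snd_hs_deriv by (rule sum.mono_neutral_left) (auto simp: hs_deriv_coeff_beyond_deg)

lemma ann_inv_iff_hs_coeff: "P \<in> ann_inv h \<longleftrightarrow> is_dop P \<and> (\<Sum>j\<le>deg_sum P. (-1) ^ j * hs_coeff P j) = 0"
proof (cases "finite (dsupp P)")
  case False then show ?thesis by (simp add: ann_inv_def is_dop_def)
next
  case True
  have "(\<Sum>\<alpha>\<in>dsupp P. Ps (P \<alpha>) * Ps (fst (inv_deriv h \<alpha>)) * Ps h ^ (deg_sum P - mdeg \<alpha>))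
      = (\<Sum>\<alpha>\<in>dsupp P. Ps (P \<alpha>) * (\<Sum>j\<le>deg_sum P. (-1) ^ j * Ps (fst (hs_deriv h \<alpha>) j)) * Ps h ^ (deg_sum P - mdeg \<alpha>))"
    by (intro sum.cong refl) (simp add: inv_deriv_hs_at_neg1 hs_at_neg1_extend[OF mdeg_le_deg_sum[OF True]])
  also have "\<dots> = (\<Sum>j\<le>deg_sum P. (-1) ^ j * hs_coeff P j)"
    unfolding hs_coeff_def by (rule sum_swap_mult)
  finally show ?thesis using ann_inv_iff_inv_deriv[where h=h, OF True] by simp
qed

lemma ann_hs_imp_ann_inv: "P \<in> ann_hs h \<Longrightarrow> P \<in> ann_inv h"
  by (simp add: ann_hs_iff_hs_coeff ann_inv_iff_hs_coeff)

lemma dop_act_power_hs_coeff: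
  assumes "finite (dsupp P)" "deg_sum P \<le> m"
  shows "dop_act P (Ps h ^ m) = Ps h ^ (m - deg_sum P) * (\<Sum>j\<le>deg_sum P. of_nat (m ^ j) * hs_coeff P j)"
proof -
  have "dop_act P (Ps h ^ m) = (\<Sum>\<alpha>\<in>dsupp P. Ps (P \<alpha>) * (hs_at m (hs_deriv h \<alpha>) * Ps h ^ (m - mdeg \<alpha>)))"
    unfolding dop_act_def
  proof (intro sum.cong refl)
    fix \<alpha> assume "\<alpha> \<in> dsupp P"
    then have "mdeg \<alpha> \<le> m" using mdeg_le_deg_sum[OF assms(1)] assms(2) by (meson order_trans)
    then show "Ps (P \<alpha>) * pdm \<alpha> (Ps h ^ m) = Ps (P \<alpha>) * (hs_at m (hs_deriv h \<alpha>) * Ps h ^ (m - mdeg \<alpha>))"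
      by (simp add: pdm_power_hs_at)
  qed
  also have "\<dots> = (\<Sum>\<alpha>\<in>dsupp P. Ps (P \<alpha>) * ((\<Sum>j\<le>deg_sum P. of_nat (m ^ j) * Ps (fst (hs_deriv h \<alpha>) j)) * (Ps h ^ (m - deg_sum P) * Ps h ^ (deg_sum P - mdeg \<alpha>))))"
  proof (intro sum.cong refl)
    fix \<alpha> assume a: "\<alpha> \<in> dsupp P"
    have ar: "(m - deg_sum P) + (deg_sum P - mdeg \<alpha>) = m - mdeg \<alpha>" using mdeg_le_deg_sum[OF assms(1) a] assms(2) by simp
    have e: "Ps h ^ (m - deg_sum P) * Ps h ^ (deg_sum P - mdeg \<alpha>) = Ps h ^ (m - mdeg \<alpha>)"
      by (simp only: power_add[symmetric] ar)
    show "Ps (P \<alpha>) * (hs_at m (hs_deriv h \<alpha>) * Ps h ^ (m - mdeg \<alpha>)) = Ps (P \<alpha>) * ((\<Sum>j\<le>deg_sum P. of_nat (m ^ j) * Ps (fst (hs_deriv h \<alpha>) j)) * (Ps h ^ (m - deg_sum P) * Ps h ^ (deg_sum P - mdeg \<alpha>)))"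
      by (simp only: e hs_at_extend[OF mdeg_le_deg_sum[OF assms(1) a]])
  qed
  also have "\<dots> = (\<Sum>\<alpha>\<in>dsupp P. (Ps h ^ (m - deg_sum P) * Ps (P \<alpha>)) * (\<Sum>j\<le>deg_sum P. of_nat (m ^ j) * Ps (fst (hs_deriv h \<alpha>) j)) * Ps h ^ (deg_sum P - mdeg \<alpha>))"
    by (simp only: mult_ac)
  also have "\<dots> = (\<Sum>j\<le>deg_sum P. of_nat (m ^ j) * (\<Sum>\<alpha>\<in>dsupp P. (Ps h ^ (m - deg_sum P) * Ps (P \<alpha>)) * Ps (fst (hs_deriv h \<alpha>) j) * Ps h ^ (deg_sum P - mdeg \<alpha>)))"
    by (rule sum_swap_mult)
  also have "\<dots> = Ps h ^ (m - deg_sum P) * (\<Sum>j\<le>deg_sum P. of_nat (m ^ j) * hs_coeff P j)"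
    unfolding hs_coeff_def by (simp only: sum_distrib_left mult_ac)
  finally show ?thesis .
qed

lemma ann_hs_if_kills_powers:
  assumes dop: "is_dop P" and h0: "Ps h \<noteq> 0" and z: "\<And>m. m \<ge> N \<Longrightarrow> dop_act P (Ps h ^ m) = 0"
  shows "P \<in> ann_hs h"
proof -
  have fin: "finite (dsupp P)" using dop by (simp add: is_dop_def)
  have "hs_coeff P j = 0" for j
  proof (cases "j \<le> deg_sum P")
    case True
    have "\<exists>g. conv_ps g \<and> (\<Sum>i\<le>deg_sum P. of_nat (m ^ i) * hs_coeff P i) = 0 * g" if m: "max N (deg_sum P) \<le> m" for m
    proof -
      have "Ps h ^ (m - deg_sum P) * (\<Sum>i\<le>deg_sum P. of_nat (m ^ i) * hs_coeff P i) = 0"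
        using z[of m] dop_act_power_hs_coeff[OF fin, of m] m by simp
      then show ?thesis using h0 by (intro exI[of _ 0]) auto
    qed
    then show ?thesis
      using coeffs_multiple_if_values_multiple[where N="max N (deg_sum P)" and d="deg_sum P" and c="hs_coeff P" and a=0]
        True by auto
  next
    case False
    show ?thesis unfolding hs_coeff_def
    proof (intro sum.neutral ballI)
      fix \<alpha> assume "\<alpha> \<in> dsupp P"
      then have "mdeg \<alpha> < j" using mdeg_le_deg_sum[OF fin] False by (meson le_trans not_le)
      then show "Ps (P \<alpha>) * Ps (fst (hs_deriv h \<alpha>) j) * Ps h ^ (deg_sum P - mdeg \<alpha>) = 0" by (simp add: hs_deriv_coeff_beyond_deg)
    qed
  qed
  then show ?thesis using dop by (simp add: ann_hs_iff_hs_coeff)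
qed

end

section \<open>Order-one annihilators of \<open>1/h\<close> are logarithmic\<close>

lemma order1_ann_inv_iff:
  assumes dop: "is_dop P" and o1: "dop_ord_le P 1" and h0: "Ps h \<noteq> 0"
  shows "P \<in> ann_inv h \<longleftrightarrow> Ps (P mi0) * Ps h = (\<Sum>i\<in>UNIV. Ps (P (ei i)) * pd i (Ps h))"
proof -
  have fin: "finite (dsupp P)" using dop by (simp add: is_dop_def)
  define M where "M = deg_sum P"
  define X where "X = (\<Sum>\<alpha>\<in>dsupp P. Ps (P \<alpha>) * Ps (fst (inv_deriv h \<alpha>)) * Ps h ^ (M - mdeg \<alpha>))"
  have X: "X = Ps (P mi0) * Ps h ^ M - (\<Sum>i\<in>UNIV. Ps (P (ei i)) * pd i (Ps h) * Ps h ^ (M - 1))"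
  proof -
    have "X = (\<Sum>\<alpha>\<in>order1_minds. Ps (P \<alpha>) * Ps (fst (inv_deriv h \<alpha>)) * Ps h ^ (M - mdeg \<alpha>))"
      unfolding X_def by (rule sum.mono_neutral_left) (use dsupp_order1[OF o1] in \<open>auto simp: dsupp_def\<close>)
    also have "\<dots> = Ps (P mi0) * Ps h ^ M - (\<Sum>i\<in>UNIV. Ps (P (ei i)) * pd i (Ps h) * Ps h ^ (M - 1))"
      by (simp add: sum_order1_minds inv_deriv_mi0 inv_deriv_ei sum_negf)
    finally show ?thesis .
  qed
  have "P \<in> ann_inv h \<longleftrightarrow> X = 0" using ann_inv_iff_inv_deriv[OF fin, of h] dop by (simp add: X_def M_def)
  also have "\<dots> \<longleftrightarrow> Ps (P mi0) * Ps h = (\<Sum>i\<in>UNIV. Ps (P (ei i)) * pd i (Ps h))"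
  proof (cases "M = 0")
    case True
    have z: "Ps (P (ei i)) = 0" for i
    proof (rule ccontr)
      assume "Ps (P (ei i)) \<noteq> 0"
      then have "ei i \<in> dsupp P" by (auto simp: dsupp_def)
      then have "mdeg (ei i) \<le> M" unfolding M_def by (rule mdeg_le_deg_sum[OF fin])
      then show False using True by simp
    qed
    show ?thesis unfolding X using True h0 by (simp add: z)
  next
    case False
    then have "Ps h ^ M = Ps h ^ (M - 1) * Ps h" by (metis power_minus_mult zero_less_iff_neq_zero)
    then have "X = Ps h ^ (M - 1) * (Ps (P mi0) * Ps h - (\<Sum>i\<in>UNIV. Ps (P (ei i)) * pd i (Ps h)))"
      unfolding X by (simp add: algebra_simps sum_distrib_left)
    then show ?thesis using h0 by simp
  qed
  finally show ?thesis .
qed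

lemma mult_pd_power: "a * pd i (a ^ k) = of_nat k * a ^ k * pd i (a :: ('n::finite) ps)"
proof (cases k)
  case (Suc n) then show ?thesis by (simp only: pd_power) (simp add: algebra_simps)
qed simp

lemma order1_ann_inv_log_ops:
  assumes dop: "is_dop P" and o1: "dop_ord_le P 1" and h0: "Ps h \<noteq> 0" and ann: "P \<in> ann_inv h"
  shows "P \<in> log_ops h"
proof -
  define P0 where "P0 = Ps (P mi0)"
  define Pi where "Pi i = Ps (P (ei i))" for i
  have crit: "P0 * Ps h = (\<Sum>i\<in>UNIV. Pi i * pd i (Ps h))"
    using order1_ann_inv_iff[OF dop o1 h0] ann by (simp add: P0_def Pi_def)
  have "\<exists>g. convergent_ps g \<and> dop_apply P (ps_mult (ps_pow h k) f) = ps_mult (ps_pow h k) g"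
    if f: "convergent_ps f" for k f
  proof -
    define F where "F = Ps f"
    define G where "G = P0 * F + (\<Sum>i\<in>UNIV. Pi i * pd i F) + of_nat k * P0 * F"
    have cvG: "conv_ps G" unfolding G_def P0_def Pi_def F_def
      using f dop by (intro conv_ps_add conv_ps_mult conv_ps_sum conv_ps_pd conv_ps_of_nat conv_ps_coeff conv_ps_Ps) auto
    have "Ps h * dop_act P (Ps h ^ k * F) = Ps h * (Ps h ^ k * G)"
    proof -
      have "Ps h * dop_act P (Ps h ^ k * F)
          = P0 * Ps h ^ Suc k * F + (\<Sum>i\<in>UNIV. Pi i * ((Ps h * pd i (Ps h ^ k)) * F + Ps h ^ Suc k * pd i F))"
        by (simp add: dop_act_order1[OF o1] P0_def Pi_def pd_mult sum_distrib_left algebra_simps)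
      also have "\<dots> = P0 * Ps h ^ Suc k * F + (\<Sum>i\<in>UNIV. (of_nat k * Ps h ^ k * F) * (Pi i * pd i (Ps h)) + Ps h ^ Suc k * (Pi i * pd i F))"
        by (simp add: mult_pd_power algebra_simps)
      also have "\<dots> = P0 * Ps h ^ Suc k * F + (of_nat k * Ps h ^ k * F) * (P0 * Ps h) + Ps h ^ Suc k * (\<Sum>i\<in>UNIV. Pi i * pd i F)"
        by (simp add: sum.distrib sum_distrib_left[symmetric] crit)
      also have "\<dots> = Ps h * (Ps h ^ k * G)"
        by (simp add: G_def algebra_simps)
      finally show ?thesis .
    qed
    then have "dop_act P (Ps h ^ k * F) = Ps h ^ k * G" using h0 by simp
    then show ?thesis using cvG
      by (intro exI[of _ "coef G"]) (simp add: conv_ps_def dop_apply_eq_dop_act ps_mult_coef ps_pow_Ps F_def)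
  qed
  then show ?thesis using dop by (simp add: log_ops_def)
qed

section \<open>Left ideals\<close>

lemma dop_lideal_is_dop: "P \<in> dop_lideal S \<Longrightarrow> (\<And>P. P \<in> S \<Longrightarrow> is_dop P) \<Longrightarrow> is_dop P"
  by (induction rule: dop_lideal.induct) (auto simp: is_dop_zero is_dop_add is_dop_comp)

lemma dop_lideal_idem: "dop_lideal (dop_lideal S) = dop_lideal S"
proof
  show "dop_lideal (dop_lideal S) \<subseteq> dop_lideal S" by (rule dop_lideal_subset) simp
qed (auto intro: dop_lideal.lid_gen)

lemma finite_dsupp_add: "finite (dsupp P) \<Longrightarrow> finite (dsupp Q) \<Longrightarrow> finite (dsupp (dop_add P Q))"
  using dsupp_add[of P Q] by (rule finite_subset) simp

lemma Ps_neg: "Ps (\<lambda>\<beta>. - f \<beta>) = - Ps f"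
  by (rule Ps_eqI) simp

lemma convergent_ps_uminus: "convergent_ps f \<Longrightarrow> convergent_ps (\<lambda>\<beta>. - (f::('n::finite) cps) \<beta>)"
  using convergent_ps_scale[of f "-1"] by simp

definition dop_diff :: "('n::finite) dop \<Rightarrow> 'n dop \<Rightarrow> 'n dop" where
  "dop_diff P Q = dop_add P (dop_comp (mult_op (\<lambda>\<beta>. - ps_one \<beta>)) Q)"

lemma is_dop_diff: "is_dop P \<Longrightarrow> is_dop Q \<Longrightarrow> is_dop (dop_diff P Q)"
  unfolding dop_diff_def by (intro is_dop_add is_dop_comp is_dop_mult_op convergent_ps_uminus convergent_ps_one)

lemma dop_act_dop_diff: "is_dop P \<Longrightarrow> is_dop Q \<Longrightarrow> dop_act (dop_diff P Q) a = dop_act P a - dop_act Q a"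
  by (simp add: dop_diff_def dop_act_add is_dop_finite_dsupp finite_dsupp_comp finite_dsupp_mult_op dop_act_mult_op_comp Ps_neg)

lemma dop_diff_in_lideal:
  "P \<in> dop_lideal S \<Longrightarrow> Q \<in> dop_lideal S \<Longrightarrow> dop_diff P Q \<in> dop_lideal S"
  unfolding dop_diff_def
  by (intro dop_lideal.lid_add dop_lideal.lid_lmult is_dop_mult_op convergent_ps_uminus convergent_ps_one)

lemma dop_lideal_combination:
  fixes n :: nat
  assumes E: "\<And>j. E j \<in> dop_lideal T" and T: "\<And>P. P \<in> T \<Longrightarrow> is_dop P" and p: "\<And>j. conv_ps (p j)"
  shows "\<exists>R\<in>dop_lideal T. \<forall>x. dop_act R x = (\<Sum>j\<le>n. p j * dop_act (E j) x)"
proof -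
  have dE: "finite (dsupp (E j))" for j using dop_lideal_is_dop[OF E T] by (rule is_dop_finite_dsupp)
  have pE: "dop_comp (mult_op (coef (p j))) (E j) \<in> dop_lideal T" for j
    by (rule dop_lideal.lid_lmult[OF is_dop_mult_op[OF convergent_ps_coef[OF p]] E])
  have act_pE: "dop_act (dop_comp (mult_op (coef (p j))) (E j)) x = p j * dop_act (E j) x" for j x
    by (simp add: dop_act_mult_op_comp dE)
  show ?thesis
  proof (induction n)
    case 0
    show ?case using pE act_pE by auto
  next
    case (Suc n)
    then obtain R where R: "R \<in> dop_lideal T" "\<forall>x. dop_act R x = (\<Sum>j\<le>n. p j * dop_act (E j) x)" by blast
    have "finite (dsupp R)" using dop_lideal_is_dop[OF R(1) T] by (rule is_dop_finite_dsupp)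
    then show ?case
      using R pE act_pE
      by (intro bexI[of _ "dop_add R (dop_comp (mult_op (coef (p (Suc n)))) (E (Suc n)))"])
         (auto simp: dop_act_add dE finite_dsupp_comp finite_dsupp_mult_op intro: dop_lideal.lid_add)
  qed
qed

definition ann_inv_order1 :: "('n::finite) cps \<Rightarrow> 'n dop set" where
  "ann_inv_order1 h = {Q. Q \<in> ann_inv h \<and> dop_ord_le Q 1}"

lemma is_dop_ann_inv: "P \<in> ann_inv h \<Longrightarrow> is_dop P"
  by (simp add: ann_inv_def)

lemma is_dop_ann_inv_order1: "P \<in> ann_inv_order1 h \<Longrightarrow> is_dop P"
  unfolding ann_inv_order1_def by (blast intro: is_dop_ann_inv)

lemma ann_inv_order1_lideal_subset:
  assumes "dop_lideal (ann_inv h) = ann_inv h"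
  shows "dop_lideal (ann_inv_order1 h) \<subseteq> ann_inv h"
  using dop_lideal_subset[of "ann_inv_order1 h" "ann_inv h"] assms by (auto simp: ann_inv_order1_def intro: dop_lideal.lid_gen)

lemma gen_by_order_one_ann_inv:
  assumes lid: "dop_lideal S = ann_inv h" and ST: "S \<subseteq> dop_lideal (ann_inv_order1 h)"
  shows "gen_by_order_one (ann_inv h)"
proof -
  have "ann_inv_order1 h \<subseteq> dop_lideal S" using lid by (auto simp: ann_inv_order1_def)
  then have "dop_lideal (ann_inv_order1 h) = ann_inv h"
    using dop_lideal_subset[OF ST] dop_lideal_subset[of "ann_inv_order1 h" S] lid by blast
  moreover have "\<forall>P\<in>ann_inv_order1 h. is_dop P \<and> dop_ord_le P 1" by (auto simp: ann_inv_order1_def is_dop_ann_inv)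
  ultimately show ?thesis unfolding gen_by_order_one_def by blast
qed

section \<open>Case (1): \<open>\<V>\<^sub>0 = \<O>[Der(-log h)]\<close>\<close>

text \<open>\<open>alg\<close> is the \<open>\<O>\<close>-span of \<open>1\<close> and of the words in \<open>Th\<close>; being closed under composition
  (\<open>alg_comp\<close>) it contains the \<open>\<O>\<close>-algebra generated by \<open>Th\<close>, and each of its elements is \<open>c + L\<close>
  with \<open>L\<close> in the left ideal generated by \<open>Th\<close> (\<open>alg_decomp\<close>).\<close>

locale order1_family =
  fixes Th :: "('n::finite) dop set"
  assumes gens_order1: "\<And>\<theta>. \<theta> \<in> Th \<Longrightarrow> is_dop \<theta> \<and> dop_ord_le \<theta> 1"
begin

inductive_set words :: "'n dop set" where
  word_gen: "\<theta> \<in> Th \<Longrightarrow> \<theta> \<in> words"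
| word_comp: "\<theta> \<in> Th \<Longrightarrow> u \<in> words \<Longrightarrow> dop_comp \<theta> u \<in> words"

inductive_set alg :: "'n dop set" where
  alg_coeff: "convergent_ps c \<Longrightarrow> mult_op c \<in> alg"
| alg_word: "convergent_ps c \<Longrightarrow> u \<in> words \<Longrightarrow> dop_comp (mult_op c) u \<in> alg"
| alg_add: "w1 \<in> alg \<Longrightarrow> w2 \<in> alg \<Longrightarrow> dop_add w1 w2 \<in> alg"

lemma is_dop_words: "u \<in> words \<Longrightarrow> is_dop u"
  by (induction rule: words.induct) (auto simp: gens_order1 is_dop_comp)

lemma is_dop_alg: "w \<in> alg \<Longrightarrow> is_dop w"
  by (induction rule: alg.induct) (auto simp: is_dop_mult_op is_dop_comp is_dop_add is_dop_words)

lemma alg_mult_coeff: "w \<in> alg \<Longrightarrow> convergent_ps c \<Longrightarrow> \<exists>w'\<in>alg. \<forall>a. dop_act w' a = Ps c * dop_act w a"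
proof (induction rule: alg.induct)
  case (alg_coeff c')
  show ?case
    by (rule bexI[of _ "mult_op (coef (Ps c * Ps c'))"])
       (use alg_coeff in \<open>auto simp: dop_act_mult_op intro!: alg.alg_coeff convergent_ps_coef conv_ps_mult conv_ps_Ps\<close>)
next
  case (alg_word c' u)
  show ?case
    by (rule bexI[of _ "dop_comp (mult_op (coef (Ps c * Ps c'))) u"])
       (use alg_word in \<open>auto simp: dop_act_mult_op_comp is_dop_finite_dsupp is_dop_words intro!: alg.alg_word convergent_ps_coef conv_ps_mult conv_ps_Ps\<close>)
next
  case (alg_add w1 w2)
  then obtain v1 v2 where "v1 \<in> alg" "v2 \<in> alg" "\<forall>a. dop_act v1 a = Ps c * dop_act w1 a" "\<forall>a. dop_act v2 a = Ps c * dop_act w2 a"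
    by blast
  then show ?case
    by (intro bexI[of _ "dop_add v1 v2"])
       (auto simp: dop_act_add is_dop_finite_dsupp is_dop_alg alg_add.hyps distrib_left intro: alg.alg_add)
qed

lemma alg_comp_gen: "w \<in> alg \<Longrightarrow> \<theta> \<in> Th \<Longrightarrow> \<exists>w'\<in>alg. \<forall>a. dop_act w' a = dop_act \<theta> (dop_act w a)"
proof (induction rule: alg.induct)
  case (alg_coeff c)
  have d: "is_dop \<theta>" "dop_ord_le \<theta> 1" using gens_order1[OF alg_coeff(2)] by auto
  define w' where "w' = dop_add (dop_comp (mult_op c) \<theta>) (mult_op (coef (vf_part \<theta> (Ps c))))"
  have "w' \<in> alg" unfolding w'_def
    using alg_coeff d by (intro alg.alg_add alg.alg_word alg.alg_coeff words.word_gen convergent_ps_coef conv_ps_vf_part conv_ps_Ps) auto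
  moreover have "dop_act w' a = dop_act \<theta> (dop_act (mult_op c) a)" for a
    unfolding w'_def using d
    by (simp add: dop_act_add is_dop_finite_dsupp is_dop_comp is_dop_mult_op finite_dsupp_comp finite_dsupp_mult_op
        dop_act_mult_op_comp dop_act_mult_op dop_act_order1_mult)
  ultimately show ?case by blast
next
  case (alg_word c u)
  have d: "is_dop \<theta>" "dop_ord_le \<theta> 1" using gens_order1[OF alg_word(3)] by auto
  define w' where "w' = dop_add (dop_comp (mult_op c) (dop_comp \<theta> u)) (dop_comp (mult_op (coef (vf_part \<theta> (Ps c)))) u)"
  have "w' \<in> alg" unfolding w'_def
    using alg_word d by (intro alg.alg_add alg.alg_word words.word_comp convergent_ps_coef conv_ps_vf_part conv_ps_Ps) auto
  moreover have "dop_act w' a = dop_act \<theta> (dop_act (dop_comp (mult_op c) u) a)" for a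
  proof -
    have fu: "finite (dsupp u)" using is_dop_words[OF alg_word(2)] is_dop_finite_dsupp by blast
    have ft: "finite (dsupp \<theta>)" using d is_dop_finite_dsupp by blast
    show ?thesis unfolding w'_def
      by (simp add: dop_act_add finite_dsupp_comp finite_dsupp_mult_op fu ft dop_act_mult_op_comp
          dop_act_comp[OF ft fu] dop_act_order1_mult[OF d(2)])
  qed
  ultimately show ?case by blast
next
  case (alg_add w1 w2)
  then obtain v1 v2 where "v1 \<in> alg" "v2 \<in> alg" "\<forall>a. dop_act v1 a = dop_act \<theta> (dop_act w1 a)" "\<forall>a. dop_act v2 a = dop_act \<theta> (dop_act w2 a)"
    by blast
  then show ?case
    by (intro bexI[of _ "dop_add v1 v2"])
       (auto simp: dop_act_add is_dop_finite_dsupp is_dop_alg alg_add.hyps dop_act_add_arg intro: alg.alg_add)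
qed

lemma alg_comp_word: "u \<in> words \<Longrightarrow> w \<in> alg \<Longrightarrow> \<exists>w'\<in>alg. \<forall>a. dop_act w' a = dop_act u (dop_act w a)"
proof (induction arbitrary: w rule: words.induct)
  case (word_gen \<theta>) then show ?case using alg_comp_gen by blast
next
  case (word_comp \<theta> u)
  obtain w'' where w'': "w'' \<in> alg" "\<forall>a. dop_act w'' a = dop_act u (dop_act w a)" using word_comp by blast
  obtain w' where w': "w' \<in> alg" "\<forall>a. dop_act w' a = dop_act \<theta> (dop_act w'' a)" using alg_comp_gen[OF w''(1) word_comp(1)] by blast
  have "dop_act (dop_comp \<theta> u) x = dop_act \<theta> (dop_act u x)" for x
    using gens_order1[OF word_comp(1)] is_dop_words[OF word_comp(2)] by (simp add: dop_act_comp is_dop_finite_dsupp)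
  then show ?case using w' w'' by auto
qed

lemma alg_comp_act: "w1 \<in> alg \<Longrightarrow> w2 \<in> alg \<Longrightarrow> \<exists>w'\<in>alg. \<forall>a. dop_act w' a = dop_act w1 (dop_act w2 a)"
proof (induction rule: alg.induct)
  case (alg_coeff c)
  then show ?case using alg_mult_coeff[OF alg_coeff(2) alg_coeff(1)] by (simp add: dop_act_mult_op)
next
  case (alg_word c u)
  obtain w'' where w'': "w'' \<in> alg" "\<forall>a. dop_act w'' a = dop_act u (dop_act w2 a)" using alg_comp_word[OF alg_word(2,3)] by blast
  obtain w' where w': "w' \<in> alg" "\<forall>a. dop_act w' a = Ps c * dop_act w'' a" using alg_mult_coeff[OF w''(1) alg_word(1)] by blast
  show ?case using w' w'' is_dop_words[OF alg_word(2)] by (auto simp: dop_act_mult_op_comp is_dop_finite_dsupp)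
next
  case (alg_add w1 w1')
  then obtain v1 v2 where "v1 \<in> alg" "v2 \<in> alg" "\<forall>a. dop_act v1 a = dop_act w1 (dop_act w2 a)" "\<forall>a. dop_act v2 a = dop_act w1' (dop_act w2 a)"
    by blast
  then show ?case
    by (intro bexI[of _ "dop_add v1 v2"])
       (auto simp: dop_act_add is_dop_finite_dsupp is_dop_alg alg_add.hyps intro: alg.alg_add)
qed

lemma alg_comp: "w1 \<in> alg \<Longrightarrow> w2 \<in> alg \<Longrightarrow> dop_comp w1 w2 \<in> alg"
proof -
  assume a: "w1 \<in> alg" "w2 \<in> alg"
  obtain w' where w': "w' \<in> alg" "\<forall>a. dop_act w' a = dop_act w1 (dop_act w2 a)" using alg_comp_act[OF a] by blast
  have "dop_comp w1 w2 = w'"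
    by (rule dop_eq_by_dop_act) (use a w' is_dop_alg in \<open>auto simp: is_dop_finite_dsupp finite_dsupp_comp dop_act_comp\<close>)
  then show ?thesis using w' by simp
qed

lemma words_in_lideal: "u \<in> words \<Longrightarrow> u \<in> dop_lideal Th"
  by (induction rule: words.induct) (auto intro: dop_lideal.intros simp: gens_order1)

lemma alg_decomp: "w \<in> alg \<Longrightarrow> \<exists>c L. convergent_ps c \<and> L \<in> dop_lideal Th \<and> w = dop_add (mult_op c) L"
proof (induction rule: alg.induct)
  case (alg_coeff c) then show ?case by (intro exI[of _ c] exI[of _ dop_zero]) (auto simp: dop_add_zero intro: dop_lideal.intros)
next
  case (alg_word c u)
  then show ?case
    by (intro exI[of _ ps_zero] exI[of _ "dop_comp (mult_op c) u"])
       (auto simp: mult_op_zero dop_zero_add convergent_ps_zero is_dop_mult_op words_in_lideal intro: dop_lideal.lid_lmult)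
next
  case (alg_add w1 w2)
  then obtain c1 L1 c2 L2 where "convergent_ps c1" "L1 \<in> dop_lideal Th" "w1 = dop_add (mult_op c1) L1"
    "convergent_ps c2" "L2 \<in> dop_lideal Th" "w2 = dop_add (mult_op c2) L2" by blast
  moreover have "dop_add L1 L2 \<in> dop_lideal Th" using calculation by (blast intro: dop_lideal.lid_add)
  moreover have "dop_add (dop_add (mult_op c1) L1) (dop_add (mult_op c2) L2) = dop_add (mult_op (\<lambda>\<beta>. c1 \<beta> + c2 \<beta>)) (dop_add L1 L2)"
    by (auto simp: dop_add_def mult_op_def fun_eq_iff ps_zero_def)
  ultimately show ?case
    by (intro exI[of _ "\<lambda>\<beta>. c1 \<beta> + c2 \<beta>"] exI[of _ "dop_add L1 L2"]) (auto simp: convergent_ps_add)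
qed

end

text \<open>If \<open>v(h) = g h\<close>, then \<open>(v + g)(1/h) = - v(h)/h\<^sup>2 + g/h = 0\<close>.\<close>

definition log_shifts :: "('n::finite) cps \<Rightarrow> 'n dop set" where
  "log_shifts h = {dop_add v (mult_op g) | v g.
     v \<in> log_derivs h \<and> convergent_ps g \<and> dop_apply v h = ps_mult h g}"

lemma log_derivs_ord: "v \<in> log_derivs h \<Longrightarrow> dop_ord_le v 1"
  by (auto simp: log_derivs_def dop_ord_le_def)

lemma log_derivs_mi0: "v \<in> log_derivs h \<Longrightarrow> v mi0 = ps_zero"
  by (auto simp: log_derivs_def dsupp_def)

lemma log_shifts_order1:
  assumes "\<theta> \<in> log_shifts h"
  shows "is_dop \<theta> \<and> dop_ord_le \<theta> 1"
proof -
  obtain v g where vg: "\<theta> = dop_add v (mult_op g)" "v \<in> log_derivs h" "convergent_ps g"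
    using assms unfolding log_shifts_def by blast
  have "is_dop v" using vg(2) by (simp add: log_derivs_def)
  moreover have "dop_ord_le v 1" using vg(2) by (rule log_derivs_ord)
  ultimately show ?thesis
    using vg by (simp add: is_dop_add is_dop_mult_op dop_ord_le_add dop_ord_le_mult_op)
qed

lemma log_shifts_subset_ann_inv_order1:
  assumes h0: "Ps h \<noteq> 0"
  shows "log_shifts h \<subseteq> ann_inv_order1 h"
proof
  fix \<theta> assume "\<theta> \<in> log_shifts h"
  then obtain v g where vg: "\<theta> = dop_add v (mult_op g)" "v \<in> log_derivs h" "convergent_ps g"
    "dop_apply v h = ps_mult h g" unfolding log_shifts_def by blast
  have dt: "is_dop \<theta>" and ot: "dop_ord_le \<theta> 1"
    using log_shifts_order1[OF \<open>\<theta> \<in> log_shifts h\<close>] by auto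
  have "dop_act v (Ps h) = Ps (dop_apply v h)" by (simp add: dop_apply_eq_dop_act)
  then have "(\<Sum>i\<in>UNIV. Ps (v (ei i)) * pd i (Ps h)) = Ps h * Ps g"
    using vg(4) log_derivs_mi0[OF vg(2)]
    by (simp add: dop_act_order1[OF log_derivs_ord[OF vg(2)]] ps_mult_coef)
  moreover have "Ps (\<theta> mi0) = Ps g" "Ps (\<theta> (ei i)) = Ps (v (ei i))" for i
    using vg(1) log_derivs_mi0[OF vg(2)] by (simp_all add: dop_add_def mult_op_def ps_zero_def)
  ultimately have "\<theta> \<in> ann_inv h" using order1_ann_inv_iff[OF dt ot h0] by (simp add: mult.commute)
  then show "\<theta> \<in> ann_inv_order1 h" using ot by (simp add: ann_inv_order1_def)
qed

interpretation log_shift: order1_family "log_shifts h" for h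
  by unfold_locales (rule log_shifts_order1)

lemma O_alg_subset_log_shift_alg: "O_alg h \<subseteq> log_shift.alg h"
proof
  fix P assume "P \<in> O_alg h"
  then show "P \<in> log_shift.alg h"
  proof (induction rule: O_alg.induct)
    case (oa_coeff a) then show ?case by (rule log_shift.alg_coeff)
  next
    case (oa_der v)
    obtain g where g: "convergent_ps g" "dop_apply v h = ps_mult h g"
      using oa_der by (auto simp: log_derivs_def)
    define \<theta> where "\<theta> = dop_add v (mult_op g)"
    have shift: "\<theta> \<in> log_shifts h" using oa_der g by (auto simp: log_shifts_def \<theta>_def)
    have dv: "is_dop v" using oa_der by (simp add: log_derivs_def)
    have dt: "is_dop \<theta>" using log_shifts_order1[OF shift] by simp
    have "v = dop_add (dop_comp (mult_op ps_one) \<theta>) (mult_op (\<lambda>\<beta>. - g \<beta>))"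
      by (rule dop_eq_by_dop_act)
         (use dv dt in \<open>auto simp: is_dop_finite_dsupp finite_dsupp_comp finite_dsupp_mult_op dop_act_add dop_act_mult_op_comp
             dop_act_mult_op Ps_neg \<theta>_def finite_dsupp_add\<close>)
    moreover have "dop_add (dop_comp (mult_op ps_one) \<theta>) (mult_op (\<lambda>\<beta>. - g \<beta>)) \<in> log_shift.alg h"
      by (intro log_shift.alg_add log_shift.alg_word log_shift.alg_coeff log_shift.word_gen shift convergent_ps_one convergent_ps_uminus g)
    ultimately show ?case by simp
  next
    case (oa_add P Q) then show ?case by (blast intro: log_shift.alg_add)
  next
    case (oa_comp P Q) then show ?case by (blast intro: log_shift.alg_comp)
  qed
qed

lemma mult_op_ann_inv_zero:
  assumes "Ps h \<noteq> 0" "convergent_ps c" "mult_op c \<in> ann_inv h"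
  shows "c = ps_zero"
proof -
  have "Ps c * Ps h = 0"
    using assms order1_ann_inv_iff[OF is_dop_mult_op[OF assms(2)] dop_ord_le_mult_op assms(1)]
    by (simp add: mult_op_def)
  then show ?thesis using assms(1) by (simp add: Ps_eq_0_iff)
qed

lemma log_ann_inv_in_order1_lideal_if_O_alg:
  assumes h0: "Ps h \<noteq> 0" and ideal: "dop_lideal (ann_inv h) = ann_inv h"
    and eq: "log_ops h = O_alg h" and P: "P \<in> log_ops h" "P \<in> ann_inv h"
  shows "P \<in> dop_lideal (ann_inv_order1 h)"
proof -
  have "P \<in> log_shift.alg h" using P eq O_alg_subset_log_shift_alg by blast
  then obtain c L where cL: "convergent_ps c" "L \<in> dop_lideal (log_shifts h)" "P = dop_add (mult_op c) L"
    using log_shift.alg_decomp by blast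
  have LT: "L \<in> dop_lideal (ann_inv_order1 h)"
    using cL(2) dop_lideal_subset[of "log_shifts h" "ann_inv_order1 h"] log_shifts_subset_ann_inv_order1[OF h0]
    by (auto intro: dop_lideal.lid_gen)
  have dP: "is_dop P" using P(2) by (rule is_dop_ann_inv)
  have dL: "is_dop L" using LT is_dop_ann_inv_order1 by (rule dop_lideal_is_dop)
  have act_P: "dop_act P a = Ps c * a + dop_act L a" for a
    using dL by (simp add: cL(3) dop_act_add finite_dsupp_mult_op is_dop_finite_dsupp dop_act_mult_op)
  have "dop_diff P L = mult_op c"
    by (rule dop_eq_by_dop_act) (use dP dL in \<open>auto simp: is_dop_diff is_dop_finite_dsupp dop_act_dop_diff act_P
        finite_dsupp_mult_op dop_act_mult_op\<close>)
  moreover have "dop_diff P L \<in> ann_inv h"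
  proof -
    have "L \<in> ann_inv h" using LT ann_inv_order1_lideal_subset[OF ideal] by blast
    then have "dop_diff P L \<in> dop_lideal (ann_inv h)"
      using P(2) by (intro dop_diff_in_lideal dop_lideal.lid_gen)
    then show ?thesis using ideal by simp
  qed
  ultimately have "c = ps_zero" using mult_op_ann_inv_zero[OF h0 cL(1)] by simp
  then show ?thesis using cL(3) LT by (simp add: mult_op_zero dop_zero_add)
qed

section \<open>Case (2): \<open>Ann h\<^sup>s\<close> generated in order one, \<open>h\<close> in its Jacobian ideal\<close>

lemma dop_act_order1_vf_part: "dop_ord_le Q 1 \<Longrightarrow> dop_act Q a = Ps (Q mi0) * a + vf_part Q a"
  by (simp add: dop_act_order1 vf_part_def)

lemma dop_act_order1_const:
  assumes "dop_ord_le Q 1" "\<And>i. pd i c = 0"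
  shows "dop_act Q (c * a) = c * dop_act Q a"
  using dop_act_order1_mult[OF assms(1)] assms(2) by (simp add: vf_part_def)

lemma dop_act_euler_power:
  assumes o1: "dop_ord_le \<xi> 1" and z: "\<xi> mi0 = ps_zero" and euler: "dop_act \<xi> a = a"
  shows "dop_act \<xi> (a ^ m) = of_nat m * a ^ m"
proof (induction m)
  case 0
  show ?case using dop_act_order1_vf_part[OF o1, of 1] z by (simp add: vf_part_def)
next
  case (Suc m)
  have "vf_part \<xi> a = a" using dop_act_order1_vf_part[OF o1, of a] z euler by simp
  then show ?case using Suc by (simp add: dop_act_order1_mult[OF o1] algebra_simps)
qed

lemma jacobian_euler_field:
  assumes "in_jacobian_ideal h"
  obtains \<xi> where "is_dop \<xi>" "dop_ord_le \<xi> 1" "\<xi> mi0 = ps_zero" "dop_act \<xi> (Ps h) = Ps h"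
proof -
  obtain a where a: "\<forall>i. convergent_ps (a i)" "h = (\<lambda>\<beta>. \<Sum>i\<in>UNIV. ps_mult (a i) (ps_pd i h) \<beta>)"
    using assms by (auto simp: in_jacobian_ideal_def)
  have "Ps h = (\<Sum>i\<in>UNIV. Ps (a i) * pd i (Ps h))"
    by (subst (1) a(2)) (rule Ps_eqI, simp add: coef_sum coef_mult pd.rep_eq)
  then show ?thesis using a(1) by (intro that[of "vector_field a"] is_dop_vector_field dop_ord_le_vector_field) (simp_all add: dop_act_vector_field)
qed

lemma euler_shift_ann_inv_order1:
  assumes h0: "Ps h \<noteq> 0" and \<xi>: "is_dop \<xi>" "dop_ord_le \<xi> 1" "\<xi> mi0 = ps_zero"
    and euler: "dop_act \<xi> (Ps h) = Ps h"
  shows "dop_add \<xi> (mult_op ps_one) \<in> ann_inv_order1 h"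
proof -
  define \<theta> where "\<theta> = dop_add \<xi> (mult_op ps_one)"
  have dth: "is_dop \<theta>" by (simp add: \<theta>_def \<xi> is_dop_add is_dop_mult_op convergent_ps_one)
  have oth: "dop_ord_le \<theta> 1" unfolding \<theta>_def by (rule dop_ord_le_add[OF \<xi>(2) dop_ord_le_mult_op])
  have "Ps (\<theta> mi0) = 1" "Ps (\<theta> (ei i)) = Ps (\<xi> (ei i))" for i
    using \<xi>(3) by (simp_all add: \<theta>_def dop_add_def mult_op_def ps_zero_def)
  moreover have "dop_act \<xi> (Ps h) = (\<Sum>i\<in>UNIV. Ps (\<xi> (ei i)) * pd i (Ps h))"
    using \<xi>(3) by (simp add: dop_act_order1[OF \<xi>(2)])
  ultimately have "\<theta> \<in> ann_inv h" using order1_ann_inv_iff[OF dth oth h0] euler by simp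
  then show ?thesis using oth by (simp add: ann_inv_order1_def \<theta>_def)
qed

text \<open>With \<open>\<xi>(a\<^sup>m) = m a\<^sup>m\<close> and \<open>\<theta> = \<xi> + 1\<close>, the operators \<open>E\<^sub>0 = 0\<close>,
  \<open>E\<^sub>j\<^sub>+\<^sub>1 = \<xi> E\<^sub>j + (-1)\<^sup>j \<theta>\<close> satisfy \<open>E\<^sub>j(a\<^sup>m) = (m\<^sup>j - (-1)\<^sup>j) a\<^sup>m\<close>.\<close>

lemma euler_shift_ops:
  fixes \<xi> :: "('n::finite) dop"
  assumes \<xi>: "is_dop \<xi>" "dop_ord_le \<xi> 1" "\<xi> mi0 = ps_zero" and euler: "dop_act \<xi> a = a"
    and \<theta>: "dop_add \<xi> (mult_op ps_one) \<in> T" and T: "\<And>P. P \<in> T \<Longrightarrow> is_dop P"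
  obtains E where "\<And>j. E j \<in> dop_lideal T"
    "\<And>j m. dop_act (E j) (a ^ m) = (of_nat (m ^ j) - (-1) ^ j) * a ^ m"
proof -
  define \<theta>' where "\<theta>' = dop_add \<xi> (mult_op ps_one)"
  have dth: "is_dop \<theta>'" using T[OF \<theta>] by (simp add: \<theta>'_def)
  have act_th: "dop_act \<theta>' x = dop_act \<xi> x + x" for x
    using \<xi>(1) by (simp add: \<theta>'_def dop_act_add is_dop_finite_dsupp finite_dsupp_mult_op dop_act_mult_op)
  have cvm1: "convergent_ps (coef ((-1) ^ j :: 'n ps))" for j
    by (intro convergent_ps_coef conv_ps_power conv_ps_uminus conv_ps_one)
  define E where "E = rec_nat dop_zero (\<lambda>j Ej. dop_add (dop_comp \<xi> Ej) (dop_comp (mult_op (coef ((-1) ^ j))) \<theta>'))"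
  have E0: "E 0 = dop_zero" and ES: "E (Suc j) = dop_add (dop_comp \<xi> (E j)) (dop_comp (mult_op (coef ((-1) ^ j))) \<theta>')" for j
    by (simp_all add: E_def)
  have ET: "E j \<in> dop_lideal T" for j
  proof (induction j)
    case 0 show ?case by (simp add: E0 dop_lideal.lid_zero)
  next
    case (Suc j) show ?case unfolding ES
      by (intro dop_lideal.lid_add dop_lideal.lid_lmult[OF \<xi>(1) Suc]
          dop_lideal.lid_lmult[OF is_dop_mult_op[OF cvm1] dop_lideal.lid_gen[OF \<theta>[folded \<theta>'_def]]])
  qed
  have dE: "is_dop (E j)" for j using dop_lideal_is_dop[OF ET T] .
  have "dop_act (E j) (a ^ m) = (of_nat (m ^ j) - (-1) ^ j) * a ^ m" for j m
  proof (induction j)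
    case 0 then show ?case by (simp add: E0 dop_act_zero)
  next
    case (Suc j)
    have "dop_act (E (Suc j)) (a ^ m) = dop_act \<xi> (dop_act (E j) (a ^ m)) + (-1) ^ j * dop_act \<theta>' (a ^ m)"
      using \<xi>(1) dE[of j] dth
      by (simp add: ES dop_act_add is_dop_finite_dsupp finite_dsupp_comp finite_dsupp_mult_op dop_act_comp dop_act_mult_op)
    also have "\<dots> = (of_nat (m ^ j) - (-1) ^ j) * dop_act \<xi> (a ^ m) + (-1) ^ j * (dop_act \<xi> (a ^ m) + a ^ m)"
      by (simp add: Suc act_th dop_act_order1_const[OF \<xi>(2)] del: of_nat_power)
    also have "\<dots> = (of_nat (m ^ Suc j) - (-1) ^ Suc j) * a ^ m"
      by (simp add: dop_act_euler_power[OF \<xi>(2,3) euler] algebra_simps)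
    finally show ?case .
  qed
  then show ?thesis using that ET by blast
qed

lemma ann_hs_subset_order1_lideal:
  assumes "gen_by_order_one (ann_hs h)"
  shows "ann_hs h \<subseteq> dop_lideal (ann_inv_order1 h)"
proof -
  obtain S where S: "\<forall>P\<in>S. is_dop P \<and> dop_ord_le P 1" "dop_lideal S = ann_hs h"
    using assms by (auto simp: gen_by_order_one_def)
  have "S \<subseteq> ann_inv_order1 h"
    using S dop_lideal.lid_gen[of _ S] by (auto simp: ann_inv_order1_def ann_hs_imp_ann_inv)
  then show ?thesis using dop_lideal_subset[of S "ann_inv_order1 h"] S(2) by (auto intro: dop_lideal.lid_gen)
qed

lemma dop_act_log_op_power:
  assumes "P \<in> log_ops h"
  obtains g where "conv_ps g" "dop_act P (Ps h ^ m) = Ps h ^ m * g"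
proof -
  obtain g where g: "convergent_ps g" "dop_apply P (ps_mult (ps_pow h m) ps_one) = ps_mult (ps_pow h m) g"
    using assms convergent_ps_one unfolding log_ops_def by blast
  have "dop_act P (Ps h ^ m) = Ps h ^ m * Ps g"
    using g(2) by (simp add: dop_apply_eq_dop_act ps_mult_coef ps_pow_Ps coef_inject[symmetric])
  then show ?thesis using g(1) by (intro that[of "Ps g"]) (auto simp: conv_ps_Ps)
qed

lemma hs_coeff_multiple_if_log:
  assumes P: "P \<in> log_ops h" and h0: "Ps h \<noteq> 0" and j: "j \<le> deg_sum P"
  shows "\<exists>g. conv_ps g \<and> hs_coeff h P j = Ps h ^ deg_sum P * g"
proof (rule coeffs_multiple_if_values_multiple[where c="hs_coeff h P", OF _ j])
  fix m assume m: "deg_sum P \<le> m"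
  have fP: "finite (dsupp P)" using P by (simp add: log_ops_def is_dop_finite_dsupp)
  obtain g where g: "conv_ps g" "dop_act P (Ps h ^ m) = Ps h ^ m * g" using dop_act_log_op_power[OF P] .
  have e: "Ps h ^ m = Ps h ^ (m - deg_sum P) * Ps h ^ deg_sum P" using m by (simp flip: power_add)
  have "Ps h ^ (m - deg_sum P) * (\<Sum>i\<le>deg_sum P. of_nat (m ^ i) * hs_coeff h P i) = dop_act P (Ps h ^ m)"
    using dop_act_power_hs_coeff[where h=h, OF fP m] by simp
  also have "\<dots> = Ps h ^ (m - deg_sum P) * (Ps h ^ deg_sum P * g)"
    unfolding g(2) by (simp add: e mult.assoc)
  finally show "\<exists>g. conv_ps g \<and> (\<Sum>i\<le>deg_sum P. of_nat (m ^ i) * hs_coeff h P i) = Ps h ^ deg_sum P * g"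
    using h0 g(1) by auto
qed

lemma log_ann_inv_reduced_coeffs:
  assumes h0: "Ps h \<noteq> 0" and P: "P \<in> log_ops h" "P \<in> ann_inv h"
  obtains p where "\<And>j. conv_ps (p j)" "(\<Sum>j\<le>deg_sum P. (-1) ^ j * p j) = 0"
    "\<And>m. deg_sum P \<le> m \<Longrightarrow> dop_act P (Ps h ^ m) = Ps h ^ m * (\<Sum>j\<le>deg_sum P. of_nat (m ^ j) * p j)"
proof -
  let ?H = "Ps h"
  define M where "M = deg_sum P"
  have fP: "finite (dsupp P)" using P by (simp add: log_ops_def is_dop_finite_dsupp)
  have "\<forall>j. \<exists>g. conv_ps g \<and> (j \<le> M \<longrightarrow> hs_coeff h P j = ?H ^ M * g)"
  proof
    fix j
    show "\<exists>g. conv_ps g \<and> (j \<le> M \<longrightarrow> hs_coeff h P j = ?H ^ M * g)"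
      using hs_coeff_multiple_if_log[OF P(1) h0, of j] conv_ps_zero unfolding M_def
      by (cases "j \<le> deg_sum P") auto
  qed
  then obtain p where "\<forall>j. conv_ps (p j) \<and> (j \<le> M \<longrightarrow> hs_coeff h P j = ?H ^ M * p j)"
    by (rule choice[THEN exE])
  then have p: "\<And>j. conv_ps (p j)" "\<And>j. j \<le> M \<Longrightarrow> hs_coeff h P j = ?H ^ M * p j" by simp_all
  have coeffs: "(\<Sum>j\<le>M. c j * hs_coeff h P j) = ?H ^ M * (\<Sum>j\<le>M. c j * p j)" for c
    unfolding sum_distrib_left by (rule sum.cong) (auto simp: p(2) mult_ac)
  show ?thesis
  proof (rule that[OF p(1), folded M_def])
    show "(\<Sum>j\<le>M. (-1) ^ j * p j) = 0"
      using P(2) h0 coeffs[of "\<lambda>j. (-1) ^ j"] by (simp add: ann_inv_iff_hs_coeff M_def)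
    show "dop_act P (?H ^ m) = ?H ^ m * (\<Sum>j\<le>M. of_nat (m ^ j) * p j)" if "M \<le> m" for m
    proof -
      have e: "?H ^ m = ?H ^ (m - M) * ?H ^ M" using that by (simp flip: power_add)
      show ?thesis
        using dop_act_power_hs_coeff[where h=h, OF fP that[unfolded M_def]] coeffs[of "\<lambda>j. of_nat (m ^ j)"]
        by (simp add: M_def[symmetric] e mult.assoc)
    qed
  qed
qed

text \<open>Divide the \<open>s\<close>-coefficients of \<open>P h\<^sup>s\<close> by \<open>h\<^sup>M\<close> (possible since \<open>P\<close> is logarithmic) to
  get \<open>p\<^sub>j\<close>; then \<open>R = \<Sum> p\<^sub>j E\<^sub>j\<close> lies in the ideal and agrees with \<open>P\<close> on all powers \<open>h\<^sup>m\<close>,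
  because \<open>\<Sum> (-1)\<^sup>j p\<^sub>j = 0\<close> is exactly \<open>P(1/h) = 0\<close>.  So \<open>P - R\<close> annihilates \<open>h\<^sup>s\<close>.\<close>

lemma log_ann_inv_in_order1_lideal_if_jacobian:
  assumes h0: "Ps h \<noteq> 0" and hs: "gen_by_order_one (ann_hs h)" and jac: "in_jacobian_ideal h"
    and P: "P \<in> log_ops h" "P \<in> ann_inv h"
  shows "P \<in> dop_lideal (ann_inv_order1 h)"
proof -
  let ?H = "Ps h"
  have dP: "is_dop P" using P by (simp add: log_ops_def)
  have dT: "\<And>Q. Q \<in> ann_inv_order1 h \<Longrightarrow> is_dop Q" by (rule is_dop_ann_inv_order1)
  obtain \<xi> where \<xi>: "is_dop \<xi>" "dop_ord_le \<xi> 1" "\<xi> mi0 = ps_zero" "dop_act \<xi> ?H = ?H"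
    using jacobian_euler_field[OF jac] .
  obtain E where E: "\<And>j. E j \<in> dop_lideal (ann_inv_order1 h)"
    "\<And>j m. dop_act (E j) (?H ^ m) = (of_nat (m ^ j) - (-1) ^ j) * ?H ^ m"
    using euler_shift_ops[OF \<xi> euler_shift_ann_inv_order1[OF h0 \<xi>] dT] by blast
  obtain p where p: "\<And>j. conv_ps (p j)" "(\<Sum>j\<le>deg_sum P. (-1) ^ j * p j) = 0"
    "\<And>m. deg_sum P \<le> m \<Longrightarrow> dop_act P (?H ^ m) = ?H ^ m * (\<Sum>j\<le>deg_sum P. of_nat (m ^ j) * p j)"
    using log_ann_inv_reduced_coeffs[OF h0 P] by blast
  obtain R where R: "R \<in> dop_lideal (ann_inv_order1 h)" "\<And>x. dop_act R x = (\<Sum>j\<le>deg_sum P. p j * dop_act (E j) x)"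
    using dop_lideal_combination[where E=E and p=p and n="deg_sum P", OF E(1) dT p(1)] by blast
  have dR: "is_dop R" using dop_lideal_is_dop[OF R(1) dT] .
  have "dop_act R (?H ^ m) = ?H ^ m * (\<Sum>j\<le>deg_sum P. of_nat (m ^ j) * p j) - ?H ^ m * (\<Sum>j\<le>deg_sum P. (-1) ^ j * p j)" for m
    by (simp add: R(2) E(2) sum_distrib_left algebra_simps sum_subtractf)
  then have "dop_diff P R \<in> ann_hs h"
    using p(2,3) by (intro ann_hs_if_kills_powers[OF is_dop_diff[OF dP dR] h0, of "deg_sum P"]) (simp add: dop_act_dop_diff[OF dP dR])
  then have "dop_diff P R \<in> dop_lideal (ann_inv_order1 h)" using ann_hs_subset_order1_lideal[OF hs] by blast
  moreover have "P = dop_add (dop_diff P R) R"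
    by (rule dop_eq_by_dop_act) (use dP dR is_dop_diff[OF dP dR] in
        \<open>auto simp: is_dop_finite_dsupp finite_dsupp_add dop_act_add dop_act_dop_diff[OF dP dR]\<close>)
  ultimately show ?thesis using R(1) by (metis dop_lideal.lid_add)
qed

theorem lemma4p3:
  fixes h :: "('n::finite \<Rightarrow> nat) \<Rightarrow> complex"
  assumes "convergent_ps h"
    and "h \<noteq> ps_zero"
    and "h mi0 = 0"
    and "log_ops h = O_alg h \<or> (gen_by_order_one (ann_hs h) \<and> in_jacobian_ideal h)"
  shows "gen_by_order_one (ann_inv h) \<longleftrightarrow>
         (\<exists>S. S \<subseteq> log_ops h \<and> dop_lideal S = ann_inv h)"
proof -
  have h0: "Ps h \<noteq> 0" using assms(2) by (simp add: Ps_eq_0_iff)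
  show ?thesis
  proof
    assume "gen_by_order_one (ann_inv h)"
    then obtain S where S: "\<forall>P\<in>S. is_dop P \<and> dop_ord_le P 1" "dop_lideal S = ann_inv h"
      by (auto simp: gen_by_order_one_def)
    then have "S \<subseteq> log_ops h" using order1_ann_inv_log_ops[OF _ _ h0] dop_lideal.lid_gen by blast
    with S(2) show "\<exists>S. S \<subseteq> log_ops h \<and> dop_lideal S = ann_inv h" by blast
  next
    assume "\<exists>S. S \<subseteq> log_ops h \<and> dop_lideal S = ann_inv h"
    then obtain S where S: "S \<subseteq> log_ops h" "dop_lideal S = ann_inv h" by blast
    then have ideal: "dop_lideal (ann_inv h) = ann_inv h" by (metis dop_lideal_idem)
    have "P \<in> dop_lideal (ann_inv_order1 h)" if "P \<in> S" for P
      using that S dop_lideal.lid_gen[of P S] assms(4)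
        log_ann_inv_in_order1_lideal_if_O_alg[OF h0 ideal] log_ann_inv_in_order1_lideal_if_jacobian[OF h0]
      by blast
    then show "gen_by_order_one (ann_inv h)" using gen_by_order_one_ann_inv[OF S(2)] by blast
  qed
qed

end
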